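(* Let $\nu$ be an instance with $\mu_1\ge\dots\ge\mu_L$, $\mu_1>\mu_L$, fix $T$, $T_{\mathrm{FE}}>0$, $\alpha,\beta\in(0,1)$, and let $\bar\Delta:=\mathrm{Save}^*(\nu,T_{\mathrm{FE}})/T_{\mathrm{FE}}$. Let $\mathcal{L}_{\mathrm g}:=\{i\in[L]:\Delta_i<\bar\Delta-\frac{1-\alpha}{\alpha}\Delta_L\}$ and assume $\mathcal{L}_{\mathrm g}\neq\emptyset$. For $\xi_1>0$ let $\nu^{(1)}$ be the instance in which arms $i\in\mathcal{L}_{\mathrm g}$ have mean $\frac{\mu_1+\mu_L-\xi_1}{2}$ and all other arms have mean $\frac{\mu_1+\mu_L+\xi_1}{2}$, and assume $|\mathcal{L}_{\mathrm g}|\ln T/D_{\mathrm{kl}}(\nu^{(1)}_{\mathrm{low}},\nu^{(1)}_{\mathrm{high}})>T_{\mathrm{FE}}$, where $\nu^{(1)}_{\mathrm{low}},\nu^{(1)}_{\mathrm{high}}$ are the two distributions used in $\nu^{(1)}$ (lower and higher mean). If $\pi$ is $(\alpha,\beta)$-probably saving on $\{\nu,\nu^{(1)}\}$, then $$T_{\mathrm{FE}}\ge\frac{\beta\ln T}{\max_{i\in[L]}D_{\mathrm{kl}}(\nu_i,\nu^{(1)}_i)}.$$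
   Context: All arm distributions belong to a fixed single-parameter exponential family on $[0,1]$ parametrized by the mean; $\Delta_i=\mu_1-\mu_i$. A policy picks arm $i_t$ at each round based on the past; $T_{i,t}$ is the number of pulls of arm $i$ in rounds $1..t$. For any instance $\nu'$ with best arm $i^*$ and gaps $\Delta'_i=\mu'_{i^*}-\mu'_i$, let $c'_i=\ln T/D_{\mathrm{kl}}(\nu'_i,\nu'_{i^*})$ ($+\infty$ if the divergence is $0$); $\widehat{\mathrm{Save}}(\pi;\nu',T_{\mathrm{FE}})=\sum_{i:\Delta'_i>0}\Delta'_i\min\{T_{i,T_{\mathrm{FE}}},c'_i\}$; after relabeling arms in nonincreasing order of means, $i_{\mathrm{FE}}=\max\{j:\sum_{i\ge j}c'_i\ge T_{\mathrm{FE}}\}$ and $\mathrm{Save}^*(\nu',T_{\mathrm{FE}})=\Delta'_{i_{\mathrm{FE}}}(T_{\mathrm{FE}}-\sum_{i>i_{\mathrm{FE}}}c'_i)+\sum_{i>i_{\mathrm{FE}}}\Delta'_ic'_i$. A policy $\pi$ is $(\alpha,\beta)$-probably saving on a set $S$ of instances (at horizon $T$ with budget $T_{\mathrm{FE}}$) if for every $\nu'\in S$, $\mathbb{P}_{\nu'}\big(\widehat{\mathrm{Save}}(\pi;\nu',T_{\mathrm{FE}})\ge\alpha\,\mathrm{Save}^*(\nu',T_{\mathrm{FE}})\big)\ge1-T^{-\beta}/2.4$. *)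

theory Defs
  imports "HOL-Probability.Probability"
begin

text \<open>Kullback-Leibler divergence D_kl(P,Q) = int log(dP/dQ) dP (natural log).
  Note the library's KL_divergence b M N is the divergence of N from M, hence the swap.\<close>
definition Dkl :: "real measure \<Rightarrow> real measure \<Rightarrow> real" where
  "Dkl P Q = KL_divergence (exp 1) Q P"

definition sp_exp_family :: "(real \<Rightarrow> real measure) \<Rightarrow> real set \<Rightarrow> bool" where
  "sp_exp_family D I \<longleftrightarrow>
     (\<exists>\<rho> \<theta> A. sets \<rho> = sets borel \<and> emeasure \<rho> (- {0..1}) = 0 \<and> inj_on \<theta> I \<and>
        (\<forall>m\<in>I. D m = density \<rho> (\<lambda>x. ennreal (exp (\<theta> m * x - A m))) \<and>
                prob_space (D m) \<and> integrable (D m) (\<lambda>x. x) \<and> (\<integral>x. x \<partial>D m) = m))"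

text \<open>A policy: at round t+1 (t = 0,1,...) it chooses an arm from its internal random seed u,
  the arms played in rounds 1..t and the rewards observed in rounds 1..t
  (entries at positions \<ge> t are masked to 0, so only the past is visible).\<close>
type_synonym policy = "nat \<Rightarrow> real \<times> (nat \<Rightarrow> nat) \<times> (nat \<Rightarrow> real) \<Rightarrow> nat"

text \<open>Reward table Y (s, i): reward of arm i if it is played at round s+1.\<close>
primrec arm_hist :: "policy \<Rightarrow> real \<Rightarrow> (nat \<times> nat \<Rightarrow> real) \<Rightarrow> nat \<Rightarrow> nat list" where
  "arm_hist \<pi> u Y 0 = []"
| "arm_hist \<pi> u Y (Suc t) =
     (let h = arm_hist \<pi> u Y t in
      h @ [\<pi> t (u, (\<lambda>s. if s < t then h ! s else 0), (\<lambda>s. if s < t then Y (s, h ! s) else 0))])"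

definition pulls :: "policy \<Rightarrow> real \<Rightarrow> (nat \<times> nat \<Rightarrow> real) \<Rightarrow> nat \<Rightarrow> nat \<Rightarrow> nat" where
  "pulls \<pi> u Y i t = length (filter (\<lambda>j. j = i) (arm_hist \<pi> u Y t))"

definition bandit_space :: "(real \<Rightarrow> real measure) \<Rightarrow> nat \<Rightarrow> (nat \<Rightarrow> real) \<Rightarrow> (real \<times> (nat \<times> nat \<Rightarrow> real)) measure" where
  "bandit_space D L \<mu> =
     uniform_measure lborel {0..1} \<Otimes>\<^sub>M (\<Pi>\<^sub>M si\<in>UNIV \<times> {1..L}. D (\<mu> (snd si)))"

text \<open>Policy measurability (needed for the events below to be events).\<close>
definition policy_measurable :: "policy \<Rightarrow> bool" where
  "policy_measurable \<pi> \<longleftrightarrow> (\<forall>t. \<pi> t \<in> measurable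
      (borel \<Otimes>\<^sub>M ((\<Pi>\<^sub>M s\<in>UNIV. count_space (UNIV::nat set)) \<Otimes>\<^sub>M (\<Pi>\<^sub>M s\<in>UNIV. (borel :: real measure))))
      (count_space UNIV))"

definition best_mean :: "nat \<Rightarrow> (nat \<Rightarrow> real) \<Rightarrow> real" where
  "best_mean L \<mu> = Max (\<mu> ` {1..L})"

definition cfac :: "(real \<Rightarrow> real measure) \<Rightarrow> nat \<Rightarrow> (nat \<Rightarrow> real) \<Rightarrow> nat \<Rightarrow> nat \<Rightarrow> ereal" where
  "cfac D L \<mu> T i =
     (let d = Dkl (D (\<mu> i)) (D (best_mean L \<mu>)) in if d = 0 then \<infinity> else ereal (ln (real T) / d))"

definition save_hat :: "(real \<Rightarrow> real measure) \<Rightarrow> nat \<Rightarrow> (nat \<Rightarrow> real) \<Rightarrow> nat \<Rightarrow> (nat \<Rightarrow> nat) \<Rightarrow> real" where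
  "save_hat D L \<mu> T n =
     (\<Sum>i\<in>{i\<in>{1..L}. best_mean L \<mu> - \<mu> i > 0}.
        (best_mean L \<mu> - \<mu> i) * real_of_ereal (min (ereal (real (n i))) (cfac D L \<mu> T i)))"

definition save_star_sorted :: "(real \<Rightarrow> real measure) \<Rightarrow> nat \<Rightarrow> (nat \<Rightarrow> real) \<Rightarrow> nat \<Rightarrow> nat \<Rightarrow> real" where
  "save_star_sorted D L \<mu> T TFE =
     (let c = cfac D L \<mu> T;
          \<Delta> = (\<lambda>i. best_mean L \<mu> - \<mu> i);
          iFE = Max {j\<in>{1..L}. (\<Sum>i\<in>{j..L}. c i) \<ge> ereal (real TFE)}
      in real_of_ereal (ereal (\<Delta> iFE) * (ereal (real TFE) - (\<Sum>i\<in>{iFE<..L}. c i))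
                        + (\<Sum>i\<in>{iFE<..L}. ereal (\<Delta> i) * c i)))"

definition sorting_perm :: "nat \<Rightarrow> (nat \<Rightarrow> real) \<Rightarrow> (nat \<Rightarrow> nat) \<Rightarrow> bool" where
  "sorting_perm L \<mu> \<sigma> \<longleftrightarrow> \<sigma> permutes {1..L} \<and>
     (\<forall>i j. 1 \<le> i \<longrightarrow> i \<le> j \<longrightarrow> j \<le> L \<longrightarrow> \<mu> (\<sigma> j) \<le> \<mu> (\<sigma> i))"

definition save_star :: "(real \<Rightarrow> real measure) \<Rightarrow> nat \<Rightarrow> (nat \<Rightarrow> real) \<Rightarrow> nat \<Rightarrow> nat \<Rightarrow> real" where
  "save_star D L \<mu> T TFE = save_star_sorted D L (\<mu> \<circ> (SOME \<sigma>. sorting_perm L \<mu> \<sigma>)) T TFE"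

definition probably_saving ::
  "(real \<Rightarrow> real measure) \<Rightarrow> nat \<Rightarrow> policy \<Rightarrow> real \<Rightarrow> real \<Rightarrow> nat \<Rightarrow> nat \<Rightarrow> (nat \<Rightarrow> real) set \<Rightarrow> bool" where
  "probably_saving D L \<pi> \<alpha> \<beta> T TFE S \<longleftrightarrow>
     (\<forall>\<mu>'\<in>S. measure (bandit_space D L \<mu>')
        {\<omega> \<in> space (bandit_space D L \<mu>').
           save_hat D L \<mu>' T (\<lambda>i. pulls \<pi> (fst \<omega>) (snd \<omega>) i TFE) \<ge> \<alpha> * save_star D L \<mu>' T TFE}
        \<ge> 1 - real T powr (-\<beta>) / 2.4)"

end

(*
  Let \<nu> be the alternative instance of the theorem. If the pull counts after T_FE rounds
  certify saving on the original instance \<mu>, then by the choice of the threshold defining L_g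
  they cannot certify saving on \<nu>: saving on \<nu> would require at least \<alpha> T_FE pulls of
  arms of L_g, and then the saving inequality for \<mu> fails. So the event "\<pi> saves on \<mu>" has
  probability at least 1 - \<delta> under \<mu> and at most \<delta> under \<nu>, where \<delta> = T^-\<beta> / 2.4.

  The likelihood ratio of the first t rounds is a product of density ratios of the exponential
  family, one per round, and conditioning on the history shows that its logarithm has
  expectation -\<Sum> KL(\<mu>_i, \<nu>_i) over the pulled arms. This gives the data-processing
  inequality kl(P E, Q E) \<le> T_FE max_i KL(\<mu>_i, \<nu>_i) for every event E determined by the
  history, while kl(p, q) \<ge> ln (1 / (2.4 \<delta>)) = \<beta> ln T for p \<ge> 1 - \<delta> and q \<le> \<delta>.
*)

theory Submission
  imports Defs
begin

section \<open>Binary relative entropy\<close>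

definition binary_kl :: "real \<Rightarrow> real \<Rightarrow> real" where
  "binary_kl p q = p * ln (p / q) + (1 - p) * ln ((1 - p) / (1 - q))"

lemma binary_kl_eq:
  assumes "0 < p" "p \<le> 1" "0 < q" "q < 1"
  shows "binary_kl p q = p * ln p - p * ln q + (1 - p) * ln (1 - p) - (1 - p) * ln (1 - q)"
  using assms by (cases "p = 1") (auto simp: binary_kl_def ln_div algebra_simps)

lemma x_ln_x_tangent_le:
  fixes x x0 :: real
  assumes "0 \<le> x" "0 < x0"
  shows "x0 * ln x0 + (ln x0 + 1) * (x - x0) \<le> x * ln x"
proof (cases "x = 0")
  case False
  with assms have "0 < x" by simp
  have "ln (x0 / x) \<le> x0 / x - 1" using \<open>0 < x\<close> assms by (intro ln_le_minus_one) simp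
  then have "x * (ln x0 - ln x) \<le> x * (x0 / x - 1)"
    using \<open>0 < x\<close> assms by (intro mult_left_mono) (auto simp: ln_div)
  then show ?thesis using \<open>0 < x\<close> by (simp add: algebra_simps)
qed (use assms in simp)

lemma binary_kl_antimono_right:
  assumes "0 < q" "q \<le> d" "d \<le> p" "p \<le> 1" "d < 1"
  shows "binary_kl p d \<le> binary_kl p q"
proof -
  have "1 - q / d \<le> ln (d / q)"
    using ln_le_minus_one[of "q / d"] assms by (simp add: ln_div)
  moreover have "1 - (1 - q) / (1 - d) \<le> ln ((1 - d) / (1 - q))"
    using ln_le_minus_one[of "(1 - q) / (1 - d)"] assms by (simp add: ln_div)
  ultimately have "p * (1 - q / d) + (1 - p) * (1 - (1 - q) / (1 - d))
      \<le> p * ln (d / q) + (1 - p) * ln ((1 - d) / (1 - q))"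
    using assms by (intro add_mono mult_left_mono) auto
  moreover have "p * (1 - q / d) + (1 - p) * (1 - (1 - q) / (1 - d))
      = (d - q) * (p / d - (1 - p) / (1 - d))"
    using assms by (simp add: field_simps)
  moreover have "(1 - p) / (1 - d) \<le> 1" "1 \<le> p / d"
    using assms by (simp_all add: field_simps)
  then have "0 \<le> (d - q) * (p / d - (1 - p) / (1 - d))"
    using assms(2) by (intro mult_nonneg_nonneg) simp_all
  moreover have "binary_kl p q - binary_kl p d = p * ln (d / q) + (1 - p) * ln ((1 - d) / (1 - q))"
    using assms binary_kl_eq[of p q] binary_kl_eq[of p d] by (simp add: ln_div algebra_simps)
  ultimately show ?thesis by linarith
qed

lemma binary_kl_mono_left:
  assumes "0 < q" "q \<le> p0" "p0 \<le> p" "p \<le> 1" "p0 < 1"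
  shows "binary_kl p0 q \<le> binary_kl p q"
proof -
  have "p0 * ln p0 + (ln p0 + 1) * (p - p0) \<le> p * ln p"
    using assms by (intro x_ln_x_tangent_le) auto
  moreover have
    "(1 - p0) * ln (1 - p0) + (ln (1 - p0) + 1) * ((1 - p) - (1 - p0)) \<le> (1 - p) * ln (1 - p)"
    using assms by (intro x_ln_x_tangent_le) auto
  moreover have "ln (1 - p0) \<le> ln (1 - q)" "ln q \<le> ln p0"
    using assms by simp_all
  then have "0 \<le> (p - p0) * ((ln p0 - ln q) - (ln (1 - p0) - ln (1 - q)))"
    using assms(3) by (intro mult_nonneg_nonneg) simp_all
  ultimately show ?thesis
    using assms binary_kl_eq[of p q] binary_kl_eq[of p0 q] by (simp add: algebra_simps)
qed

lemma entropy_complement_tangent_le: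
  fixes d x0 :: real
  assumes "0 < d" "d < 1" "0 < x0" "x0 < 1"
  shows "(1 - 2 * x0) * ln (1 - x0) + 2 * x0 * ln x0
      + (d - x0) * (2 * (ln x0 - ln (1 - x0)) + 1 / (1 - x0))
    \<le> (1 - 2 * d) * ln (1 - d) + 2 * d * ln d"
proof -
  have "x0 * ln x0 + (ln x0 + 1) * (d - x0) \<le> d * ln d"
    using assms by (intro x_ln_x_tangent_le) auto
  moreover have
    "(1 - x0) * ln (1 - x0) + (ln (1 - x0) + 1) * ((1 - d) - (1 - x0)) \<le> (1 - d) * ln (1 - d)"
    using assms by (intro x_ln_x_tangent_le) auto
  moreover have "ln ((1 - d) / (1 - x0)) \<le> (1 - d) / (1 - x0) - 1"
    using assms by (intro ln_le_minus_one) simp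
  then have "ln (1 - d) \<le> ln (1 - x0) + (x0 - d) / (1 - x0)"
    using assms by (simp add: ln_div field_simps)
  moreover have "(d - x0) * (1 / (1 - x0)) = - ((x0 - d) / (1 - x0))"
    using assms by (simp add: field_simps)
  ultimately show ?thesis by (simp add: algebra_simps)
qed

lemma entropy_complement_nonneg:
  fixes d :: real
  assumes d: "0 < d" "d < 5 / 12"
  shows "0 \<le> (1 - 2 * d) * ln (1 - d) + 2 * d * ln d + ln (12 / 5)"
proof -
  \<comment> \<open>The left-hand side \<open>g d\<close> is convex, so it lies above its tangents;
    those at \<open>3 / 10\<close> and \<open>1 / 3\<close> are nonnegative to the left and right of \<open>3 / 10\<close>.\<close>
  define g where "g x = (1 - 2 * x) * ln (1 - x) + 2 * x * ln x + ln (12 / 5)" for x :: real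
  have tangent: "g x0 + (d - x0) * (2 * (ln x0 - ln (1 - x0)) + 1 / (1 - x0)) \<le> g d"
    if "0 < x0" "x0 < 1" for x0
    using entropy_complement_tangent_le[of d x0] that d by (simp add: g_def)
  have "0 \<le> g d"
  proof (cases "d \<le> 3 / 10")
    case True
    have "4 / 5 \<le> ln (7 / 3 :: real)"
      using ln_approx_bounds[of "7 / 3" 1] by (simp add: eval_nat_numeral)
    then have "2 * (ln (3 / 10) - ln (1 - 3 / 10)) + 1 / (1 - 3 / 10) \<le> (0 :: real)"
      by (simp add: ln_div)
    with True have slope:
      "0 \<le> (d - 3 / 10) * (2 * (ln (3 / 10) - ln (1 - 3 / 10)) + 1 / (1 - 3 / 10))"
      by (intro mult_nonpos_nonpos) auto
    have "5 * g (3 / 10) = ln ((7 / 10) ^ 2 * (3 / 10) ^ 3 * (12 / 5) ^ 5)"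
      by (simp add: g_def ln_mult ln_realpow algebra_simps)
    moreover have "0 < ln ((7 / 10) ^ 2 * (3 / 10) ^ 3 * (12 / 5) ^ 5 :: real)"
      by (intro ln_gt_zero) (simp add: eval_nat_numeral)
    ultimately have "0 < g (3 / 10)" by linarith
    moreover have
      "g (3 / 10) + (d - 3 / 10) * (2 * (ln (3 / 10) - ln (1 - 3 / 10)) + 1 / (1 - 3 / 10)) \<le> g d"
      by (rule tangent) simp_all
    ultimately show ?thesis using slope by linarith
  next
    case False
    have "3 * g (1 / 3) = ln ((2 / 3) * (1 / 3) ^ 2 * (12 / 5) ^ 3)"
      by (simp add: g_def ln_mult ln_realpow ln_div algebra_simps)
    also have "(2 / 3) * (1 / 3) ^ 2 * (12 / 5) ^ 3 = (128 / 125 :: real)"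
      by (simp add: eval_nat_numeral)
    finally have "2 / 253 \<le> g (1 / 3)"
      using ln_approx_bounds[of "128 / 125" 1] by (simp add: eval_nat_numeral)
    have "g (1 / 3) + (d - 1 / 3) * (2 * (ln (1 / 3) - ln (1 - 1 / 3)) + 1 / (1 - 1 / 3)) \<le> g d"
      by (rule tangent) simp_all
    moreover have "2 * (ln (1 / 3) - ln (1 - 1 / 3)) + 1 / (1 - 1 / 3) = 3 / 2 - 2 * ln (2 :: real)"
      by (simp add: ln_div)
    ultimately have "g (1 / 3) + (d - 1 / 3) * (3 / 2 - 2 * ln 2) \<le> g d" by simp
    moreover have "- 1 / 180 \<le> - 1 / 30 * (3 / 2 - 2 * ln (2 :: real))"
      using ln2_ge_two_thirds by argo
    moreover have "- 1 / 30 * (3 / 2 - 2 * ln 2) \<le> (d - 1 / 3) * (3 / 2 - 2 * ln (2 :: real))"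
      using False ln2_le_25_over_36 by (intro mult_right_mono) auto
    ultimately show ?thesis using \<open>2 / 253 \<le> g (1 / 3)\<close> by linarith
  qed
  then show ?thesis by (simp add: g_def)
qed

lemma binary_kl_complement_ge:
  assumes d: "0 < d" "d < 5 / 12"
  shows "- ln (12 / 5 * d) \<le> binary_kl (1 - d) d"
proof -
  have "ln (12 / 5 * d) = ln (12 / 5) + ln d" using d by (intro ln_mult_pos) auto
  then show ?thesis
    using d entropy_complement_nonneg[OF d] binary_kl_eq[of "1 - d" d] by (simp add: algebra_simps)
qed

lemma binary_kl_ge:
  assumes "0 < d" "d < 5 / 12" "1 - d \<le> p" "p \<le> 1" "0 < q" "q \<le> d"
  shows "- ln (12 / 5 * d) \<le> binary_kl p q"
proof -
  have "- ln (12 / 5 * d) \<le> binary_kl (1 - d) d"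
    using assms by (intro binary_kl_complement_ge) auto
  also have "\<dots> \<le> binary_kl p d"
    using assms by (intro binary_kl_mono_left) auto
  also have "\<dots> \<le> binary_kl p q"
    using assms by (intro binary_kl_antimono_right) auto
  finally show ?thesis .
qed

lemma (in prob_space) integral_indicator_exp_pos:
  fixes Z :: "'a \<Rightarrow> real"
  assumes F: "F \<in> events" "0 < prob F"
    and [measurable]: "Z \<in> borel_measurable M" and bound: "\<And>\<omega>. \<omega> \<in> space M \<Longrightarrow> \<bar>Z \<omega>\<bar> \<le> C"
  shows "0 < (\<integral>\<omega>. indicator F \<omega> * exp (Z \<omega>) \<partial>M)"
proof -
  have [measurable]: "F \<in> sets M" using F by simp
  have "0 < prob F * exp (- C)" using F by simp
  also have "\<dots> = (\<integral>\<omega>. indicator F \<omega> * exp (- C) \<partial>M)" using F by simp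
  also have "\<dots> \<le> (\<integral>\<omega>. indicator F \<omega> * exp (Z \<omega>) \<partial>M)"
  proof (rule integral_mono)
    show "integrable M (\<lambda>\<omega>. indicator F \<omega> * exp (Z \<omega>))"
      using bound
      by (intro integrable_const_bound[where B="exp C"]) (auto simp: indicator_def abs_le_iff)
    show "indicator F \<omega> * exp (- C) \<le> indicator F \<omega> * exp (Z \<omega>)" if "\<omega> \<in> space M" for \<omega>
      using bound[OF that] by (auto simp: indicator_def abs_le_iff)
  qed (use F in \<open>simp add: less_top[symmetric]\<close>)
  finally show ?thesis .
qed

lemma le_ln_ratio_plus_exp:
  fixes a b z :: real
  assumes "0 < a" "0 < b"
  shows "z \<le> ln (b / a) - 1 + a / b * exp z"
proof -
  have "ln (a / b * exp z) \<le> a / b * exp z - 1" using assms by (intro ln_le_minus_one) simp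
  with assms show ?thesis by (simp add: ln_mult ln_div)
qed

lemma (in prob_space) integral_indicator_le_log_ratio:
  fixes Z :: "'a \<Rightarrow> real"
  assumes F[measurable]: "F \<in> events"
    and [measurable]: "Z \<in> borel_measurable M" and bound: "\<And>\<omega>. \<omega> \<in> space M \<Longrightarrow> \<bar>Z \<omega>\<bar> \<le> C"
  shows "(\<integral>\<omega>. indicator F \<omega> * Z \<omega> \<partial>M)
       \<le> - prob F * ln (prob F / (\<integral>\<omega>. indicator F \<omega> * exp (Z \<omega>) \<partial>M))"
proof -
  have "0 \<le> C" using bound not_empty by (meson abs_ge_zero ex_in_conv order_trans)
  define a where "a = prob F"
  define b where "b = (\<integral>\<omega>. indicator F \<omega> * exp (Z \<omega>) \<partial>M)"
  have int_Z: "integrable M (\<lambda>\<omega>. indicator F \<omega> * Z \<omega>)"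
    using bound \<open>0 \<le> C\<close> by (intro integrable_const_bound[where B=C]) (auto simp: indicator_def)
  have int_exp: "integrable M (\<lambda>\<omega>. indicator F \<omega> * exp (Z \<omega>))"
    using bound
    by (intro integrable_const_bound[where B="exp C"]) (auto simp: indicator_def abs_le_iff)
  show ?thesis
  proof (cases "a = 0")
    case True
    have "integrable M (\<lambda>\<omega>. indicator F \<omega> * C)" using F by (simp add: less_top[symmetric])
    then have "(\<integral>\<omega>. indicator F \<omega> * Z \<omega> \<partial>M) \<le> (\<integral>\<omega>. indicator F \<omega> * C \<partial>M)"
      using bound by (intro integral_mono int_Z) (auto simp: indicator_def abs_le_iff)
    then show ?thesis using True by (simp add: a_def)
  next
    case False
    then have "0 < a" by (simp add: a_def zero_less_measure_iff)
    then have "0 < b"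
      unfolding a_def b_def by (rule integral_indicator_exp_pos[OF F _ _ bound]) simp
    have pointwise: "indicator F \<omega> * Z \<omega>
        \<le> indicator F \<omega> * (ln (b / a) - 1) + a / b * (indicator F \<omega> * exp (Z \<omega>))" for \<omega>
      using le_ln_ratio_plus_exp[OF \<open>0 < a\<close> \<open>0 < b\<close>, of "Z \<omega>"] by (auto simp: indicator_def)
    have "(\<integral>\<omega>. indicator F \<omega> * Z \<omega> \<partial>M)
        \<le> (\<integral>\<omega>. indicator F \<omega> * (ln (b / a) - 1) + a / b * (indicator F \<omega> * exp (Z \<omega>)) \<partial>M)"
      using int_exp F
      by (intro integral_mono int_Z pointwise Bochner_Integration.integrable_add
          integrable_mult_right integrable_mult_left) (simp_all add: less_top[symmetric])
    also have "\<dots> = (\<integral>\<omega>. indicator F \<omega> * (ln (b / a) - 1) \<partial>M) + a / b * b"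
      using int_exp F unfolding b_def
      by (subst Bochner_Integration.integral_add) (simp_all add: less_top[symmetric])
    also have "\<dots> = a * (ln (b / a) - 1) + a / b * b"
      using F by (simp add: a_def)
    also have "\<dots> = - a * ln (a / b)"
      using \<open>0 < a\<close> \<open>0 < b\<close> by (simp add: ln_div algebra_simps)
    finally show ?thesis by (simp add: a_def b_def)
  qed
qed

text \<open>If \<open>q\<close> and \<open>1 - q\<close> are the masses of \<open>F\<close> and its complement under the measure with density
  \<open>exp Z\<close>, this is the data-processing inequality for the partition \<open>{F, -F}\<close>.\<close>
lemma (in prob_space) binary_kl_le_neg_expectation:
  fixes Z :: "'a \<Rightarrow> real"
  assumes F[measurable]: "F \<in> events"
    and Z[measurable]: "Z \<in> borel_measurable M" and bound: "\<And>\<omega>. \<omega> \<in> space M \<Longrightarrow> \<bar>Z \<omega>\<bar> \<le> C"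
    and q: "q = (\<integral>\<omega>. indicator F \<omega> * exp (Z \<omega>) \<partial>M)"
    and q_compl: "1 - q = (\<integral>\<omega>. indicator (space M - F) \<omega> * exp (Z \<omega>) \<partial>M)"
  shows "binary_kl (prob F) q \<le> - expectation Z"
proof -
  have "0 \<le> C" using bound not_empty by (meson abs_ge_zero ex_in_conv order_trans)
  have int: "integrable M (\<lambda>\<omega>. indicator A \<omega> * Z \<omega>)" if [measurable]: "A \<in> events" for A
    using bound \<open>0 \<le> C\<close> by (intro integrable_const_bound[where B=C]) (auto simp: indicator_def)
  have "expectation Z = (\<integral>\<omega>. indicator F \<omega> * Z \<omega> + indicator (space M - F) \<omega> * Z \<omega> \<partial>M)"
    by (intro Bochner_Integration.integral_cong) (auto simp: indicator_def)
  also have "\<dots> = (\<integral>\<omega>. indicator F \<omega> * Z \<omega> \<partial>M) + (\<integral>\<omega>. indicator (space M - F) \<omega> * Z \<omega> \<partial>M)"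
    by (intro Bochner_Integration.integral_add int) simp_all
  also have "\<dots> \<le> - prob F * ln (prob F / q)
      - prob (space M - F) * ln (prob (space M - F) / (1 - q))"
  proof -
    have "(\<integral>\<omega>. indicator F \<omega> * Z \<omega> \<partial>M) \<le> - prob F * ln (prob F / q)"
      using integral_indicator_le_log_ratio[OF F Z bound] by (simp only: q)
    moreover have "(\<integral>\<omega>. indicator (space M - F) \<omega> * Z \<omega> \<partial>M)
        \<le> - prob (space M - F) * ln (prob (space M - F) / (1 - q))"
      using integral_indicator_le_log_ratio[OF _ Z bound, of "space M - F"]
      by (simp only: q_compl) simp
    ultimately show ?thesis by linarith
  qed
  also have "\<dots> = - binary_kl (prob F) q"
    by (simp add: binary_kl_def prob_compl)
  finally show ?thesis by simp
qed

section \<open>Bounded integrands and product measures\<close>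

lemma (in prob_space) nn_integral_add_bound_eq:
  fixes X :: "'a \<Rightarrow> real"
  assumes [measurable]: "X \<in> borel_measurable M" and bound: "\<And>\<omega>. \<omega> \<in> space M \<Longrightarrow> \<bar>X \<omega>\<bar> \<le> C"
  shows "(\<integral>\<^sup>+\<omega>. ennreal (X \<omega> + C) \<partial>M) = ennreal (expectation X + C)"
proof -
  have "integrable M X" using bound by (intro integrable_const_bound[where B=C]) auto
  moreover have "AE \<omega> in M. 0 \<le> X \<omega> + C"
    using bound by (intro AE_I2) (fastforce simp: abs_le_iff)
  ultimately show ?thesis by (simp add: nn_integral_eq_integral prob_space)
qed

lemma (in prob_space) abs_expectation_le:
  fixes X :: "'a \<Rightarrow> real"
  assumes "X \<in> borel_measurable M" and bound: "\<And>\<omega>. \<omega> \<in> space M \<Longrightarrow> \<bar>X \<omega>\<bar> \<le> C"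
  shows "\<bar>expectation X\<bar> \<le> C"
proof -
  have "integrable M X" using assms by (intro integrable_const_bound[where B=C]) auto
  moreover have "AE \<omega> in M. - C \<le> X \<omega>" "AE \<omega> in M. X \<omega> \<le> C"
    using bound by (intro AE_I2; fastforce simp: abs_le_iff)+
  ultimately show ?thesis
    using integral_ge_const[of X "- C"] integral_le_const[of X C] by (simp add: abs_le_iff)
qed

lemma nn_integral_PiM_split_coordinate:
  fixes M :: "'i \<Rightarrow> 'a measure"
  assumes j: "j \<in> J" and M: "\<And>i. i \<in> J \<Longrightarrow> prob_space (M i)"
    and [measurable]: "f \<in> borel_measurable (PiM J M)"
  shows "(\<integral>\<^sup>+Y. f Y \<partial>PiM J M)
       = (\<integral>\<^sup>+z. f ((snd z)(j := fst z)) \<partial>(M j \<Otimes>\<^sub>M PiM (J - {j}) M))"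
proof -
  have [measurable]: "(\<lambda>z. (snd z)(j := fst z)) \<in> M j \<Otimes>\<^sub>M PiM (J - {j}) M \<rightarrow>\<^sub>M PiM J M"
    using j by (intro measurable_fun_upd[where J="J - {j}"]) auto
  have "distr (M j \<Otimes>\<^sub>M PiM (J - {j}) M) (PiM J M) (\<lambda>(x, X). X(j := x)) = PiM J M"
    using distr_pair_PiM_eq_PiM[of "J - {j}" M j] M j by (simp add: insert_absorb)
  then have "(\<integral>\<^sup>+Y. f Y \<partial>PiM J M)
      = (\<integral>\<^sup>+Y. f Y \<partial>distr (M j \<Otimes>\<^sub>M PiM (J - {j}) M) (PiM J M) (\<lambda>z. (snd z)(j := fst z)))"
    by (simp add: case_prod_beta')
  also have "\<dots> = (\<integral>\<^sup>+z. f ((snd z)(j := fst z)) \<partial>(M j \<Otimes>\<^sub>M PiM (J - {j}) M))"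
    by (rule nn_integral_distr) measurable
  finally show ?thesis .
qed

lemma nn_integral_PiM_coordinate:
  fixes M :: "'i \<Rightarrow> 'a measure"
  assumes j: "j \<in> J" and M: "\<And>i. i \<in> J \<Longrightarrow> prob_space (M i)"
    and g[measurable]: "g \<in> PiM J M \<rightarrow>\<^sub>M N"
    and g_indep: "\<And>Y x. Y \<in> space (PiM J M) \<Longrightarrow> x \<in> space (M j) \<Longrightarrow> g (Y(j := x)) = g Y"
    and K[measurable]: "K \<in> borel_measurable (N \<Otimes>\<^sub>M M j)"
  shows "(\<integral>\<^sup>+Y. K (g Y, Y j) \<partial>PiM J M) = (\<integral>\<^sup>+Y. (\<integral>\<^sup>+y. K (g Y, y) \<partial>M j) \<partial>PiM J M)"
proof -
  define J0 where "J0 = J - {j}"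
  interpret Mj: prob_space "M j" using M j .
  interpret P0: prob_space "PiM J0 M" by (rule prob_space_PiM) (auto simp: J0_def M)
  interpret pair_sigma_finite "M j" "PiM J0 M" ..
  have [measurable]: "(\<lambda>Y. Y j) \<in> PiM J M \<rightarrow>\<^sub>M M j" by (rule measurable_component_singleton[OF j])
  obtain x0 where x0: "x0 \<in> space (M j)" using Mj.not_empty by blast
  define h where "h X = g (X(j := x0))" for X
  have h[measurable]: "h \<in> PiM J0 M \<rightarrow>\<^sub>M N"
    unfolding h_def using x0 j
    by (intro measurable_compose[OF measurable_fun_upd[where J=J0] g]) (auto simp: J0_def)
  have g_upd: "g (X(j := x)) = h X" if "x \<in> space (M j)" "X \<in> space (PiM J0 M)" for x X
  proof -
    have "X(j := x0) \<in> space (PiM J M)"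
      using that x0 j by (auto simp: space_PiM PiE_iff J0_def extensional_def)
    then have "g ((X(j := x0))(j := x)) = h X" unfolding h_def by (rule g_indep[OF _ that(1)])
    then show ?thesis by simp
  qed
  define F where "F X = (\<integral>\<^sup>+y. K (h X, y) \<partial>M j)" for X
  have "(\<integral>\<^sup>+Y. K (g Y, Y j) \<partial>PiM J M) = (\<integral>\<^sup>+z. K (h (snd z), fst z) \<partial>(M j \<Otimes>\<^sub>M PiM J0 M))"
    unfolding J0_def using j M
    by (subst nn_integral_PiM_split_coordinate)
      (auto intro!: nn_integral_cong simp: space_pair_measure g_upd[unfolded J0_def])
  also have "\<dots> = (\<integral>\<^sup>+X. F X \<partial>PiM J0 M)"
    unfolding F_def using nn_integral_snd[of "\<lambda>z. K (h (snd z), fst z)"] by simp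
  also have "\<dots> = (\<integral>\<^sup>+z. F (snd z) \<partial>(M j \<Otimes>\<^sub>M PiM J0 M))"
    using nn_integral_snd[of "\<lambda>z. F (snd z)"] by (simp add: F_def Mj.emeasure_space_1)
  also have "\<dots> = (\<integral>\<^sup>+Y. (\<integral>\<^sup>+y. K (g Y, y) \<partial>M j) \<partial>PiM J M)"
    unfolding J0_def using j M
    by (subst nn_integral_PiM_split_coordinate)
      (auto intro!: nn_integral_cong simp: space_pair_measure g_upd[unfolded J0_def] F_def)
  finally show ?thesis .
qed

section \<open>Histories of a policy\<close>

type_synonym history = "real \<times> (nat \<Rightarrow> nat) \<times> (nat \<Rightarrow> real)"
type_synonym outcome = "real \<times> (nat \<times> nat \<Rightarrow> real)"

definition history_space :: "history measure" where
  "history_space = borel \<Otimes>\<^sub>M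
     ((\<Pi>\<^sub>M s\<in>UNIV. count_space (UNIV :: nat set)) \<Otimes>\<^sub>M (\<Pi>\<^sub>M s\<in>UNIV. (borel :: real measure)))"

definition outcome_space :: "nat \<Rightarrow> outcome measure" where
  "outcome_space L = borel \<Otimes>\<^sub>M (\<Pi>\<^sub>M si\<in>UNIV \<times> {1..L}. (borel :: real measure))"

definition policy_input :: "nat \<Rightarrow> nat list \<Rightarrow> outcome \<Rightarrow> history" where
  "policy_input t as \<omega> =
     (fst \<omega>, (\<lambda>s. if s < t then as ! s else 0), (\<lambda>s. if s < t then snd \<omega> (s, as ! s) else 0))"

text \<open>\<open>history \<pi> t \<omega>\<close> is the argument of the policy in round \<open>t + 1\<close>, as in \<open>arm_hist\<close>.\<close>
definition history :: "policy \<Rightarrow> nat \<Rightarrow> outcome \<Rightarrow> history" where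
  "history \<pi> t \<omega> = policy_input t (arm_hist \<pi> (fst \<omega>) (snd \<omega>) t) \<omega>"

definition arm :: "policy \<Rightarrow> nat \<Rightarrow> outcome \<Rightarrow> nat" where
  "arm \<pi> t \<omega> = \<pi> t (history \<pi> t \<omega>)"

definition reward :: "policy \<Rightarrow> nat \<Rightarrow> outcome \<Rightarrow> real" where
  "reward \<pi> t \<omega> = snd \<omega> (t, arm \<pi> t \<omega>)"

definition extend_history :: "policy \<Rightarrow> nat \<Rightarrow> history \<Rightarrow> real \<Rightarrow> history" where
  "extend_history \<pi> t h y = (fst h, (fst (snd h))(t := \<pi> t h), (snd (snd h))(t := y))"

definition arms_played :: "nat \<Rightarrow> history \<Rightarrow> nat list" where
  "arms_played t h = map (fst (snd h)) [0..<t]"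

lemma arm_hist_Suc_eq:
  "arm_hist \<pi> (fst \<omega>) (snd \<omega>) (Suc t) = arm_hist \<pi> (fst \<omega>) (snd \<omega>) t @ [arm \<pi> t \<omega>]"
  by (simp add: arm_def history_def policy_input_def Let_def)

lemma length_arm_hist [simp]: "length (arm_hist \<pi> u Y t) = t"
  by (induction t) (simp_all add: Let_def)

declare arm_hist.simps(2) [simp del]

lemma nth_arm_hist: "s < t \<Longrightarrow> arm_hist \<pi> (fst \<omega>) (snd \<omega>) t ! s = arm \<pi> s \<omega>"
  by (induction t) (auto simp: arm_hist_Suc_eq nth_append less_Suc_eq)

lemma history_0: "history \<pi> 0 \<omega> = (fst \<omega>, (\<lambda>_. 0), (\<lambda>_. 0))"
  by (simp add: history_def policy_input_def)

lemma history_arm: "s < t \<Longrightarrow> fst (snd (history \<pi> t \<omega>)) s = arm \<pi> s \<omega>"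
  by (simp add: history_def policy_input_def nth_arm_hist)

lemma history_reward: "s < t \<Longrightarrow> snd (snd (history \<pi> t \<omega>)) s = reward \<pi> s \<omega>"
  by (simp add: history_def policy_input_def nth_arm_hist reward_def)

lemma history_Suc: "history \<pi> (Suc t) \<omega> = extend_history \<pi> t (history \<pi> t \<omega>) (reward \<pi> t \<omega>)"
  by (auto simp: history_def policy_input_def extend_history_def arm_hist_Suc_eq nth_append
      reward_def arm_def less_Suc_eq fun_eq_iff)

lemma arm_hist_eq_arms_played: "arm_hist \<pi> (fst \<omega>) (snd \<omega>) t = arms_played t (history \<pi> t \<omega>)"
  by (rule nth_equalityI) (simp_all add: arms_played_def history_arm nth_arm_hist)

lemma history_cong:
  assumes "\<And>s k. s < t \<Longrightarrow> Y (s, k) = Y' (s, k)"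
  shows "history \<pi> t (u, Y) = history \<pi> t (u, Y')"
proof -
  have "arm_hist \<pi> u Y t = arm_hist \<pi> u Y' t"
    using assms
  proof (induction t)
    case (Suc t)
    then have "arm_hist \<pi> u Y t = arm_hist \<pi> u Y' t" by simp
    with Suc.prems show ?case by (simp add: arm_hist.simps(2) Let_def cong: if_cong)
  qed simp
  then show ?thesis using assms by (simp add: history_def policy_input_def fun_eq_iff)
qed

lemma space_history_space [simp]: "space history_space = UNIV"
  by (auto simp: history_space_def space_pair_measure space_PiM)

lemma measurable_history_space_components [measurable]:
  "fst \<in> history_space \<rightarrow>\<^sub>M borel"
  "(\<lambda>h. fst (snd h) s) \<in> history_space \<rightarrow>\<^sub>M count_space UNIV"
  "(\<lambda>h. snd (snd h) s) \<in> history_space \<rightarrow>\<^sub>M borel"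
  unfolding history_space_def by simp_all

lemma measurable_policy: "policy_measurable \<pi> \<Longrightarrow> \<pi> t \<in> history_space \<rightarrow>\<^sub>M count_space UNIV"
  unfolding policy_measurable_def history_space_def by blast

lemma measurable_outcome_coordinate: "(\<lambda>\<omega>. snd \<omega> (s, k)) \<in> borel_measurable (outcome_space L)"
proof (cases "k \<in> {1..L}")
  case True
  then show ?thesis unfolding outcome_space_def
    by (intro measurable_compose[OF measurable_snd measurable_component_singleton]) auto
next
  case False
  then have "\<omega> \<in> space (outcome_space L) \<Longrightarrow> snd \<omega> (s, k) = undefined" for \<omega>
    by (auto simp: outcome_space_def space_pair_measure space_PiM PiE_def extensional_def)
  then show ?thesis by (simp cong: measurable_cong)
qed

lemma measurable_policy_input: "policy_input t as \<in> outcome_space L \<rightarrow>\<^sub>M history_space"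
  unfolding policy_input_def history_space_def
proof (intro measurable_Pair measurable_PiM_single')
  show "fst \<in> outcome_space L \<rightarrow>\<^sub>M borel" by (simp add: outcome_space_def)
  show "(\<lambda>\<omega>. if s < t then snd \<omega> (s, as ! s) else 0) \<in> borel_measurable (outcome_space L)" for s
    by (cases "s < t") (simp_all add: measurable_outcome_coordinate)
qed (auto simp: space_PiM)

lemma measurable_arm_hist:
  assumes "policy_measurable \<pi>"
  shows "(\<lambda>\<omega>. arm_hist \<pi> (fst \<omega>) (snd \<omega>) t) \<in> outcome_space L \<rightarrow>\<^sub>M count_space UNIV"
proof (induction t)
  case (Suc t)
  have "(\<lambda>\<omega>. (\<lambda>as. as @ [\<pi> t (policy_input t as \<omega>)]) (arm_hist \<pi> (fst \<omega>) (snd \<omega>) t))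
      \<in> outcome_space L \<rightarrow>\<^sub>M count_space UNIV"
  proof (rule measurable_compose_countable[OF _ Suc])
    show "(\<lambda>\<omega>. as @ [\<pi> t (policy_input t as \<omega>)]) \<in> outcome_space L \<rightarrow>\<^sub>M count_space UNIV" for as
      using measurable_compose[OF measurable_policy_input measurable_policy[OF assms]] by simp
  qed
  then show ?case by (simp add: arm_hist_Suc_eq arm_def history_def)
qed simp

lemma measurable_history:
  "policy_measurable \<pi> \<Longrightarrow> history \<pi> t \<in> outcome_space L \<rightarrow>\<^sub>M history_space"
  unfolding history_def[abs_def]
  by (rule measurable_compose_countable[OF measurable_policy_input measurable_arm_hist])

lemma measurable_extend_history:
  assumes "policy_measurable \<pi>"
  shows "(\<lambda>z. extend_history \<pi> t (fst z) (snd z)) \<in> history_space \<Otimes>\<^sub>M borel \<rightarrow>\<^sub>M history_space"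
proof -
  note measurable_policy[OF assms, unfolded history_space_def, measurable]
  show ?thesis unfolding extend_history_def history_space_def
    by (intro measurable_Pair measurable_fun_upd[where J=UNIV]) auto
qed

lemma measurable_arms_played: "arms_played t \<in> history_space \<rightarrow>\<^sub>M count_space UNIV"
proof (induction t)
  case (Suc t)
  have "(\<lambda>h. (\<lambda>as. as @ [fst (snd h) t]) (arms_played t h)) \<in> history_space \<rightarrow>\<^sub>M count_space UNIV"
    by (rule measurable_compose_countable[OF _ Suc]) simp
  then show ?case by (simp add: arms_played_def)
qed (simp add: arms_played_def)

lemma pulls_eq_count_list:
  "pulls \<pi> (fst \<omega>) (snd \<omega>) i t = count_list (arms_played t (history \<pi> t \<omega>)) i"
proof -
  have "length (filter (\<lambda>j. j = i) xs) = count_list xs i" for xs :: "nat list"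
    by (induction xs) auto
  then show ?thesis by (simp add: pulls_def arm_hist_eq_arms_played)
qed

section \<open>The bandit probability space\<close>

locale bandit_model =
  fixes D :: "real \<Rightarrow> real measure" and I :: "real set" and L :: nat and \<pi> :: policy
  assumes prob_space_D: "\<And>m. m \<in> I \<Longrightarrow> prob_space (D m)"
    and sets_D: "\<And>m. m \<in> I \<Longrightarrow> sets (D m) = sets borel"
    and policy_arm: "\<And>t h. \<pi> t h \<in> {1..L}"
    and measurable_pi: "policy_measurable \<pi>"
begin

definition admissible :: "(nat \<Rightarrow> real) \<Rightarrow> bool" where
  "admissible \<mu> \<longleftrightarrow> (\<forall>i\<in>{1..L}. \<mu> i \<in> I)"

lemma arm_in_arms: "arm \<pi> t \<omega> \<in> {1..L}"
  unfolding arm_def by (rule policy_arm)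

abbreviation uniform01 :: "real measure" where
  "uniform01 \<equiv> uniform_measure lborel {0..1}"

abbreviation reward_table_space :: "(nat \<Rightarrow> real) \<Rightarrow> (nat \<times> nat \<Rightarrow> real) measure" where
  "reward_table_space \<mu> \<equiv> \<Pi>\<^sub>M si\<in>UNIV \<times> {1..L}. D (\<mu> (snd si))"

lemma prob_space_uniform01: "prob_space uniform01"
  by (rule prob_space_uniform_measure) auto

lemma prob_space_reward_table_space: "admissible \<mu> \<Longrightarrow> prob_space (reward_table_space \<mu>)"
  by (rule prob_space_PiM) (auto simp: admissible_def intro: prob_space_D)

lemma prob_space_bandit_space: "admissible \<mu> \<Longrightarrow> prob_space (bandit_space D L \<mu>)"
  unfolding bandit_space_def
  by (intro prob_space_pair prob_space_uniform01 prob_space_reward_table_space)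

lemma sets_bandit_space: "admissible \<mu> \<Longrightarrow> sets (bandit_space D L \<mu>) = sets (outcome_space L)"
  unfolding bandit_space_def outcome_space_def
  by (intro sets_pair_measure_cong sets_PiM_cong) (auto simp: admissible_def sets_D)

lemma measurable_bandit_space:
  "admissible \<mu> \<Longrightarrow> f \<in> outcome_space L \<rightarrow>\<^sub>M N \<Longrightarrow> f \<in> bandit_space D L \<mu> \<rightarrow>\<^sub>M N"
  using measurable_cong_sets[OF sets_bandit_space refl] by blast

lemma measurable_history_bandit_space:
  "admissible \<mu> \<Longrightarrow> history \<pi> t \<in> bandit_space D L \<mu> \<rightarrow>\<^sub>M history_space"
  by (rule measurable_bandit_space[OF _ measurable_history[OF measurable_pi]])

lemma nn_integral_bandit_space_fst:
  assumes "admissible \<mu>" and [measurable]: "f \<in> borel_measurable borel"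
  shows "(\<integral>\<^sup>+\<omega>. f (fst \<omega>) \<partial>bandit_space D L \<mu>) = (\<integral>\<^sup>+u. f u \<partial>uniform01)"
proof -
  interpret prob_space "reward_table_space \<mu>" by (rule prob_space_reward_table_space[OF assms(1)])
  have "distr (bandit_space D L \<mu>) uniform01 fst = uniform01"
    unfolding bandit_space_def by (rule distr_pair_fst)
  moreover have "(\<integral>\<^sup>+\<omega>. f (fst \<omega>) \<partial>bandit_space D L \<mu>)
      = (\<integral>\<^sup>+u. f u \<partial>distr (bandit_space D L \<mu>) uniform01 fst)"
    by (rule nn_integral_distr[symmetric]) (auto simp: bandit_space_def)
  ultimately show ?thesis by simp
qed

lemma measurable_nn_integral_D:
  assumes "m \<in> I" and "K \<in> borel_measurable (N \<Otimes>\<^sub>M borel)"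
  shows "(\<lambda>h. \<integral>\<^sup>+y. K (h, y) \<partial>D m) \<in> borel_measurable N"
proof -
  interpret prob_space "D m" by (rule prob_space_D[OF assms(1)])
  have "K \<in> borel_measurable (N \<Otimes>\<^sub>M D m)"
    using assms measurable_cong_sets[OF sets_pair_measure_cong[OF refl sets_D] refl] by blast
  then show ?thesis by simp
qed

lemma measurable_nn_integral_arm:
  assumes "admissible \<mu>" and "K \<in> borel_measurable (history_space \<Otimes>\<^sub>M borel)"
  shows "(\<lambda>h. \<integral>\<^sup>+y. K (h, y) \<partial>D (\<mu> (\<pi> t h))) \<in> borel_measurable history_space"
proof -
  define F where "F i h = (if i \<in> {1..L} then \<integral>\<^sup>+y. K (h, y) \<partial>D (\<mu> i) else 0)" for i h
  have "(\<lambda>h. F i h) \<in> borel_measurable history_space" for i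
    using assms measurable_nn_integral_D[of "\<mu> i" K]
    by (cases "i \<in> {1..L}") (auto simp: F_def admissible_def)
  then have "(\<lambda>h. F (\<pi> t h) h) \<in> borel_measurable history_space"
    by (rule measurable_compose_countable[OF _ measurable_policy[OF measurable_pi]])
  then show ?thesis using policy_arm by (simp add: F_def)
qed

lemma measurable_arm: "arm \<pi> t \<in> outcome_space L \<rightarrow>\<^sub>M count_space UNIV"
  unfolding arm_def[abs_def]
  by (rule measurable_compose[OF measurable_history measurable_policy]) (rule measurable_pi)+

lemma measurable_reward: "reward \<pi> t \<in> borel_measurable (outcome_space L)"
proof -
  have "(\<lambda>\<omega>. (\<lambda>k \<omega>. snd \<omega> (t, k)) (arm \<pi> t \<omega>) \<omega>) \<in> borel_measurable (outcome_space L)"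
    by (rule measurable_compose_countable[OF measurable_outcome_coordinate measurable_arm])
  then show ?thesis by (simp add: reward_def[abs_def])
qed

lemma nn_integral_reward_table_round:
  assumes \<mu>: "admissible \<mu>" and i: "i \<in> {1..L}" and u: "u \<in> space uniform01"
    and K: "K \<in> borel_measurable (history_space \<Otimes>\<^sub>M borel)"
  shows "(\<integral>\<^sup>+Y. K (history \<pi> t (u, Y), Y (t, i)) \<partial>reward_table_space \<mu>)
       = (\<integral>\<^sup>+Y. (\<integral>\<^sup>+y. K (history \<pi> t (u, Y), y) \<partial>D (\<mu> i)) \<partial>reward_table_space \<mu>)"
proof -
  have \<mu>i: "\<mu> i \<in> I" using \<mu> i by (simp add: admissible_def)
  have "(\<integral>\<^sup>+Y. K (history \<pi> t (u, Y), Y (t, i)) \<partial>reward_table_space \<mu>)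
    = (\<integral>\<^sup>+Y. (\<integral>\<^sup>+y. K (history \<pi> t (u, Y), y) \<partial>D (\<mu> (snd (t, i)))) \<partial>reward_table_space \<mu>)"
  proof (rule nn_integral_PiM_coordinate)
    show "(\<lambda>Y. history \<pi> t (u, Y)) \<in> reward_table_space \<mu> \<rightarrow>\<^sub>M history_space"
      using measurable_compose_Pair1[OF u measurable_history_bandit_space[OF \<mu>, unfolded bandit_space_def]] .
    show "history \<pi> t (u, Y((t, i) := x)) = history \<pi> t (u, Y)" for Y x
      \<comment> \<open>the history before round \<open>t + 1\<close> never looks at the rewards of that round\<close>
      by (rule history_cong) auto
    show "K \<in> borel_measurable (history_space \<Otimes>\<^sub>M D (\<mu> (snd (t, i))))"
      using K measurable_cong_sets[OF sets_pair_measure_cong[OF refl sets_D[OF \<mu>i]] refl] by auto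
  qed (use i \<mu> in \<open>auto simp: admissible_def intro: prob_space_D\<close>)
  then show ?thesis by simp
qed

lemma nn_integral_reward_fixed_arm:
  assumes \<mu>: "admissible \<mu>" and i: "i \<in> {1..L}"
    and K[measurable]: "K \<in> borel_measurable (history_space \<Otimes>\<^sub>M borel)"
  shows "(\<integral>\<^sup>+\<omega>. K (history \<pi> t \<omega>, snd \<omega> (t, i)) \<partial>bandit_space D L \<mu>)
       = (\<integral>\<^sup>+\<omega>. (\<integral>\<^sup>+y. K (history \<pi> t \<omega>, y) \<partial>D (\<mu> i)) \<partial>bandit_space D L \<mu>)"
proof -
  interpret PM: prob_space "reward_table_space \<mu>" by (rule prob_space_reward_table_space[OF \<mu>])
  have B: "bandit_space D L \<mu> = uniform01 \<Otimes>\<^sub>M reward_table_space \<mu>" by (simp add: bandit_space_def)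
  have \<mu>i: "\<mu> i \<in> I" using \<mu> i by (simp add: admissible_def)
  note hist = measurable_history_bandit_space[OF \<mu>, of t, measurable]
  have [measurable]: "(\<lambda>\<omega>. snd \<omega> (t, i)) \<in> borel_measurable (bandit_space D L \<mu>)"
    by (rule measurable_bandit_space[OF \<mu> measurable_outcome_coordinate])
  have [measurable]:
    "(\<lambda>\<omega>. \<integral>\<^sup>+y. K (history \<pi> t \<omega>, y) \<partial>D (\<mu> i)) \<in> borel_measurable (bandit_space D L \<mu>)"
    using measurable_compose[OF hist measurable_nn_integral_D[OF \<mu>i K]] by simp
  have lhs: "(\<lambda>\<omega>. K (history \<pi> t \<omega>, snd \<omega> (t, i)))
      \<in> borel_measurable (uniform01 \<Otimes>\<^sub>M reward_table_space \<mu>)"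
    unfolding B[symmetric] by measurable
  have rhs: "(\<lambda>\<omega>. \<integral>\<^sup>+y. K (history \<pi> t \<omega>, y) \<partial>D (\<mu> i))
      \<in> borel_measurable (uniform01 \<Otimes>\<^sub>M reward_table_space \<mu>)"
    unfolding B[symmetric] by measurable
  have "(\<integral>\<^sup>+\<omega>. K (history \<pi> t \<omega>, snd \<omega> (t, i)) \<partial>bandit_space D L \<mu>)
      = (\<integral>\<^sup>+u. (\<integral>\<^sup>+Y. K (history \<pi> t (u, Y), Y (t, i)) \<partial>reward_table_space \<mu>) \<partial>uniform01)"
    using PM.nn_integral_fst[OF lhs] by (simp add: B)
  also have "\<dots> = (\<integral>\<^sup>+u. (\<integral>\<^sup>+Y. (\<integral>\<^sup>+y. K (history \<pi> t (u, Y), y) \<partial>D (\<mu> i))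
      \<partial>reward_table_space \<mu>) \<partial>uniform01)"
    by (intro nn_integral_cong nn_integral_reward_table_round[OF \<mu> i _ K])
  also have "\<dots> = (\<integral>\<^sup>+\<omega>. (\<integral>\<^sup>+y. K (history \<pi> t \<omega>, y) \<partial>D (\<mu> i)) \<partial>bandit_space D L \<mu>)"
    using PM.nn_integral_fst[OF rhs] by (simp add: B)
  finally show ?thesis .
qed

lemma nn_integral_reward:
  assumes \<mu>: "admissible \<mu>" and K[measurable]: "K \<in> borel_measurable (history_space \<Otimes>\<^sub>M borel)"
  shows "(\<integral>\<^sup>+\<omega>. K (history \<pi> t \<omega>, reward \<pi> t \<omega>) \<partial>bandit_space D L \<mu>)
       = (\<integral>\<^sup>+\<omega>. (\<integral>\<^sup>+y. K (history \<pi> t \<omega>, y) \<partial>D (\<mu> (arm \<pi> t \<omega>))) \<partial>bandit_space D L \<mu>)"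
proof -
  note measurable_policy[OF measurable_pi, measurable]
  define K_at where "K_at i z = (if \<pi> t (fst z) = i then K z else 0)" for i z
  have [measurable]: "K_at i \<in> borel_measurable (history_space \<Otimes>\<^sub>M borel)" for i
    unfolding K_at_def by measurable
  note hist = measurable_history_bandit_space[OF \<mu>, of t, measurable]
  have [measurable]: "(\<lambda>\<omega>. snd \<omega> (t, i)) \<in> borel_measurable (bandit_space D L \<mu>)" for i
    by (rule measurable_bandit_space[OF \<mu> measurable_outcome_coordinate])
  have [measurable]:
    "(\<lambda>\<omega>. \<integral>\<^sup>+y. K_at i (history \<pi> t \<omega>, y) \<partial>D (\<mu> i)) \<in> borel_measurable (bandit_space D L \<mu>)"
    if "i \<in> {1..L}" for i
    using that \<mu> measurable_compose[OF hist measurable_nn_integral_D[of "\<mu> i" "K_at i"]]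
    by (simp add: admissible_def)
  have "(\<integral>\<^sup>+\<omega>. K (history \<pi> t \<omega>, reward \<pi> t \<omega>) \<partial>bandit_space D L \<mu>)
      = (\<integral>\<^sup>+\<omega>. (\<Sum>i\<in>{1..L}. K_at i (history \<pi> t \<omega>, snd \<omega> (t, i))) \<partial>bandit_space D L \<mu>)"
    using policy_arm by (simp add: K_at_def sum.delta' reward_def arm_def)
  also have "\<dots> = (\<Sum>i\<in>{1..L}. \<integral>\<^sup>+\<omega>. K_at i (history \<pi> t \<omega>, snd \<omega> (t, i)) \<partial>bandit_space D L \<mu>)"
    by (rule nn_integral_sum) measurable
  also have "\<dots> = (\<Sum>i\<in>{1..L}. \<integral>\<^sup>+\<omega>. (\<integral>\<^sup>+y. K_at i (history \<pi> t \<omega>, y) \<partial>D (\<mu> i)) \<partial>bandit_space D L \<mu>)"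
    by (intro sum.cong refl nn_integral_reward_fixed_arm[OF \<mu>]) simp_all
  also have "\<dots> = (\<integral>\<^sup>+\<omega>. (\<Sum>i\<in>{1..L}. \<integral>\<^sup>+y. K_at i (history \<pi> t \<omega>, y) \<partial>D (\<mu> i)) \<partial>bandit_space D L \<mu>)"
    by (rule nn_integral_sum[symmetric]) simp
  also have "\<dots> = (\<integral>\<^sup>+\<omega>. (\<integral>\<^sup>+y. K (history \<pi> t \<omega>, y) \<partial>D (\<mu> (arm \<pi> t \<omega>))) \<partial>bandit_space D L \<mu>)"
  proof (rule nn_integral_cong)
    fix \<omega>
    have "(\<integral>\<^sup>+y. K_at i (h, y) \<partial>D (\<mu> i)) = (if \<pi> t h = i then \<integral>\<^sup>+y. K (h, y) \<partial>D (\<mu> i) else 0)"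
      for i h
      by (simp add: K_at_def)
    then show "(\<Sum>i\<in>{1..L}. \<integral>\<^sup>+y. K_at i (history \<pi> t \<omega>, y) \<partial>D (\<mu> i))
        = (\<integral>\<^sup>+y. K (history \<pi> t \<omega>, y) \<partial>D (\<mu> (arm \<pi> t \<omega>)))"
      using policy_arm by (simp add: sum.delta' arm_def)
  qed
  finally show ?thesis .
qed

lemma integral_arm_reward:
  fixes f :: "nat \<Rightarrow> real \<Rightarrow> real"
  assumes \<mu>: "admissible \<mu>" and f[measurable]: "\<And>i. f i \<in> borel_measurable borel"
    and bound: "\<And>i y. i \<in> {1..L} \<Longrightarrow> \<bar>f i y\<bar> \<le> C"
  shows "(\<integral>\<omega>. f (arm \<pi> t \<omega>) (reward \<pi> t \<omega>) \<partial>bandit_space D L \<mu>)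
       = (\<integral>\<omega>. (\<integral>y. f (arm \<pi> t \<omega>) y \<partial>D (\<mu> (arm \<pi> t \<omega>))) \<partial>bandit_space D L \<mu>)"
    (is "?lhs = (\<integral>\<omega>. ?g (arm \<pi> t \<omega>) \<partial>_)")
proof -
  interpret B: prob_space "bandit_space D L \<mu>" by (rule prob_space_bandit_space[OF \<mu>])
  note measurable_policy[OF measurable_pi, measurable]
  have arm[measurable]: "arm \<pi> t \<in> bandit_space D L \<mu> \<rightarrow>\<^sub>M count_space UNIV"
    by (rule measurable_bandit_space[OF \<mu> measurable_arm])
  have [measurable]: "reward \<pi> t \<in> borel_measurable (bandit_space D L \<mu>)"
    by (rule measurable_bandit_space[OF \<mu> measurable_reward])
  note arm_in = arm_in_arms[of t]
  have D_f: "f i \<in> borel_measurable (D (\<mu> i))" "prob_space (D (\<mu> i))" if "i \<in> {1..L}" for i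
    using that \<mu> sets_D prob_space_D by (auto simp: admissible_def cong: measurable_cong_sets)
  have g_bound: "\<bar>?g i\<bar> \<le> C" if "i \<in> {1..L}" for i
    using prob_space.abs_expectation_le[OF D_f(2)[OF that] D_f(1)[OF that]] bound[OF that] by simp
  have m_f_arm: "(\<lambda>\<omega>. f (arm \<pi> t \<omega>) (reward \<pi> t \<omega>)) \<in> borel_measurable (bandit_space D L \<mu>)"
    by (rule measurable_compose_countable[OF _ arm]) measurable
  have m_g_arm: "(\<lambda>\<omega>. ?g (arm \<pi> t \<omega>)) \<in> borel_measurable (bandit_space D L \<mu>)"
    by (rule measurable_compose[OF arm]) simp
  have K: "(\<lambda>z. ennreal (f (\<pi> t (fst z)) (snd z) + C)) \<in> borel_measurable (history_space \<Otimes>\<^sub>M borel)"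
    by (rule measurable_compose_countable[where f="\<lambda>i z. ennreal (f i (snd z) + C)"]) measurable
  have "ennreal (?lhs + C)
      = (\<integral>\<^sup>+\<omega>. (\<integral>\<^sup>+y. ennreal (f (arm \<pi> t \<omega>) y + C) \<partial>D (\<mu> (arm \<pi> t \<omega>))) \<partial>bandit_space D L \<mu>)"
    using B.nn_integral_add_bound_eq[OF m_f_arm bound[OF arm_in]] nn_integral_reward[OF \<mu> K, of t]
    by (simp add: arm_def)
  also have "\<dots> = (\<integral>\<^sup>+\<omega>. ennreal (?g (arm \<pi> t \<omega>) + C) \<partial>bandit_space D L \<mu>)"
    using prob_space.nn_integral_add_bound_eq[OF D_f(2) D_f(1)] bound arm_in by simp
  also have "\<dots> = ennreal ((\<integral>\<omega>. ?g (arm \<pi> t \<omega>) \<partial>bandit_space D L \<mu>) + C)"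
    by (rule B.nn_integral_add_bound_eq[OF m_g_arm g_bound[OF arm_in]])
  finally show ?thesis
    using B.abs_expectation_le[OF m_f_arm bound[OF arm_in]]
      B.abs_expectation_le[OF m_g_arm g_bound[OF arm_in]]
    by (simp add: abs_le_iff)
qed

lemma sum_count_arms_played: "(\<Sum>i\<in>{1..L}. count_list (arms_played t (history \<pi> t \<omega>)) i) = t"
proof -
  have "set (arms_played t (history \<pi> t \<omega>)) \<subseteq> {1..L}"
    using arm_in_arms[of _ \<omega>] by (auto simp: arms_played_def history_arm)
  then show ?thesis by (simp add: sum_count_set arms_played_def)
qed

end

section \<open>Change of measure between two instances\<close>

locale exp_family_bandit = bandit_model +
  fixes \<rho> :: "real measure" and \<theta> A :: "real \<Rightarrow> real"
  assumes sets_base: "sets \<rho> = sets borel"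
    and base_null: "emeasure \<rho> (- {0..1}) = 0"
    and D_density: "\<And>m. m \<in> I \<Longrightarrow> D m = density \<rho> (\<lambda>x. ennreal (exp (\<theta> m * x - A m)))"
begin

text \<open>Clamping \<open>x\<close> to \<open>[0, 1]\<close> is invisible almost everywhere, since \<open>\<rho>\<close> lives on \<open>[0, 1]\<close>,
  but makes the log density ratio bounded.\<close>
definition log_density_ratio :: "real \<Rightarrow> real \<Rightarrow> real \<Rightarrow> real" where
  "log_density_ratio m m' x = (\<theta> m' - \<theta> m) * max 0 (min 1 x) - (A m' - A m)"

lemma measurable_log_density_ratio [measurable]: "log_density_ratio m m' \<in> borel_measurable borel"
  unfolding log_density_ratio_def by measurable

lemma log_density_ratio_swap: "log_density_ratio m' m x = - log_density_ratio m m' x"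
  by (simp add: log_density_ratio_def algebra_simps)

lemma abs_log_density_ratio_le: "\<bar>log_density_ratio m m' x\<bar> \<le> \<bar>\<theta> m' - \<theta> m\<bar> + \<bar>A m' - A m\<bar>"
proof -
  have "\<bar>(\<theta> m' - \<theta> m) * max 0 (min 1 x)\<bar> \<le> \<bar>\<theta> m' - \<theta> m\<bar>"
    by (auto simp: abs_mult intro: mult_left_le)
  then show ?thesis unfolding log_density_ratio_def by linarith
qed

lemma density_log_density_ratio:
  assumes "m \<in> I" "m' \<in> I"
  shows "D m' = density (D m) (\<lambda>x. ennreal (exp (log_density_ratio m m' x)))"
proof -
  note sets_base[measurable_cong]
  have "AE x in \<rho>. x \<in> {0..1}"
    using base_null sets_base by (intro AE_I'[of "- {0..1}"]) (auto simp: null_sets_def)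
  then have "AE x in \<rho>. ennreal (exp (\<theta> m * x - A m)) * ennreal (exp (log_density_ratio m m' x))
      = ennreal (exp (\<theta> m' * x - A m'))"
    by eventually_elim
      (simp add: log_density_ratio_def ennreal_mult''[symmetric] exp_add[symmetric] algebra_simps)
  then have "density \<rho>
      (\<lambda>x. ennreal (exp (\<theta> m * x - A m)) * ennreal (exp (log_density_ratio m m' x))) = D m'"
    unfolding D_density[OF assms(2)] by (intro density_cong) simp_all
  then show ?thesis
    unfolding D_density[OF assms(1)] by (subst density_density_eq) simp_all
qed

lemma Dkl_eq_integral_log_density_ratio:
  assumes "m \<in> I" "m' \<in> I"
  shows "Dkl (D m) (D m') = - (\<integral>x. log_density_ratio m m' x \<partial>D m)"
proof -
  interpret prob_space "D m'" by (rule prob_space_D[OF assms(2)])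
  note sets_D[OF assms(2), measurable_cong]
  define r where "r x = exp (log_density_ratio m' m x)" for x
  have [measurable]: "r \<in> borel_measurable (D m')" unfolding r_def[abs_def] by measurable
  have Dm: "D m = density (D m') (\<lambda>x. ennreal (r x))"
    unfolding r_def by (rule density_log_density_ratio[OF assms(2,1)])
  have "Dkl (D m) (D m') = (\<integral>x. r x * log (exp 1) (r x) \<partial>D m')"
    unfolding Dkl_def Dm by (rule KL_density) (simp_all add: r_def)
  also have "\<dots> = (\<integral>x. r x * log_density_ratio m' m x \<partial>D m')"
    by (simp add: r_def)
  also have "\<dots> = (\<integral>x. log_density_ratio m' m x \<partial>D m)"
    unfolding Dm by (subst integral_density) (simp_all add: r_def)
  finally show ?thesis by (simp add: log_density_ratio_swap[of m' m])
qed

end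

locale bandit_pair = exp_family_bandit +
  fixes \<mu> \<nu> :: "nat \<Rightarrow> real"
  assumes admissible_\<mu>: "admissible \<mu>" and admissible_\<nu>: "admissible \<nu>"
begin

abbreviation P :: "outcome measure" where "P \<equiv> bandit_space D L \<mu>"
abbreviation Q :: "outcome measure" where "Q \<equiv> bandit_space D L \<nu>"

definition llr :: "nat \<Rightarrow> real \<Rightarrow> real" where
  "llr i = log_density_ratio (\<mu> i) (\<nu> i)"

definition llr_bound :: real where
  "llr_bound = (\<Sum>i\<in>{1..L}. \<bar>\<theta> (\<nu> i) - \<theta> (\<mu> i)\<bar> + \<bar>A (\<nu> i) - A (\<mu> i)\<bar>)"

definition history_llr :: "nat \<Rightarrow> history \<Rightarrow> real" where
  "history_llr t h = (\<Sum>s<t. llr (fst (snd h) s) (snd (snd h) s))"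

lemma measurable_llr [measurable]: "llr i \<in> borel_measurable borel"
  unfolding llr_def by simp

lemma abs_llr_le:
  assumes "i \<in> {1..L}"
  shows "\<bar>llr i x\<bar> \<le> llr_bound"
proof -
  have "\<bar>llr i x\<bar> \<le> \<bar>\<theta> (\<nu> i) - \<theta> (\<mu> i)\<bar> + \<bar>A (\<nu> i) - A (\<mu> i)\<bar>"
    unfolding llr_def by (rule abs_log_density_ratio_le)
  also have "\<dots> \<le> llr_bound"
    unfolding llr_bound_def using assms by (intro member_le_sum) auto
  finally show ?thesis .
qed

lemma measurable_history_llr [measurable]: "history_llr t \<in> borel_measurable history_space"
proof -
  have "(\<lambda>h. (\<lambda>i h. llr i (snd (snd h) s)) (fst (snd h) s) h) \<in> borel_measurable history_space"
    for s by (rule measurable_compose_countable[where f="\<lambda>i h. llr i (snd (snd h) s)"]) measurable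
  then show ?thesis unfolding history_llr_def by simp
qed

lemma history_llr_extend:
  "history_llr (Suc t) (extend_history \<pi> t h y) = history_llr t h + llr (\<pi> t h) y"
  by (simp add: history_llr_def extend_history_def)

lemma history_llr_history: "history_llr t (history \<pi> t \<omega>) = (\<Sum>s<t. llr (arm \<pi> s \<omega>) (reward \<pi> s \<omega>))"
  unfolding history_llr_def by (rule sum.cong) (simp_all add: history_arm history_reward)

lemma abs_history_llr_le: "\<bar>history_llr t (history \<pi> t \<omega>)\<bar> \<le> real t * llr_bound"
proof -
  have "\<bar>history_llr t (history \<pi> t \<omega>)\<bar> \<le> (\<Sum>s<t. \<bar>llr (arm \<pi> s \<omega>) (reward \<pi> s \<omega>)\<bar>)"
    unfolding history_llr_history by (rule sum_abs)
  also have "\<dots> \<le> (\<Sum>s<t. llr_bound)"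
    by (intro sum_mono abs_llr_le arm_in_arms)
  finally show ?thesis by simp
qed

lemmas measurable_history_P [measurable] = measurable_history_bandit_space[OF admissible_\<mu>]
  and measurable_history_Q [measurable] = measurable_history_bandit_space[OF admissible_\<nu>]

lemma nn_integral_density_step:
  assumes [measurable]: "G \<in> borel_measurable history_space"
  shows "(\<integral>\<^sup>+y. G (extend_history \<pi> t h y) \<partial>D (\<nu> (\<pi> t h))) * ennreal (exp (history_llr t h))
       = (\<integral>\<^sup>+y. G (extend_history \<pi> t h y)
          * ennreal (exp (history_llr (Suc t) (extend_history \<pi> t h y))) \<partial>D (\<mu> (\<pi> t h)))"
proof -
  have i: "\<mu> (\<pi> t h) \<in> I" "\<nu> (\<pi> t h) \<in> I"
    using admissible_\<mu> admissible_\<nu> policy_arm by (auto simp: admissible_def)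
  note sets_D[OF i(1), measurable_cong]
  have [measurable]: "extend_history \<pi> t h \<in> borel \<rightarrow>\<^sub>M history_space"
    using measurable_Pair2[OF measurable_extend_history[OF measurable_pi], of h] by simp
  have "(\<integral>\<^sup>+y. G (extend_history \<pi> t h y) \<partial>D (\<nu> (\<pi> t h)))
      = (\<integral>\<^sup>+y. ennreal (exp (llr (\<pi> t h) y)) * G (extend_history \<pi> t h y) \<partial>D (\<mu> (\<pi> t h)))"
    unfolding llr_def density_log_density_ratio[OF i] by (rule nn_integral_density) measurable
  then have "(\<integral>\<^sup>+y. G (extend_history \<pi> t h y) \<partial>D (\<nu> (\<pi> t h))) * ennreal (exp (history_llr t h))
      = (\<integral>\<^sup>+y. ennreal (exp (llr (\<pi> t h) y)) * G (extend_history \<pi> t h y)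
          * ennreal (exp (history_llr t h)) \<partial>D (\<mu> (\<pi> t h)))"
    by (simp add: nn_integral_multc)
  then show ?thesis by (simp add: history_llr_extend exp_add ennreal_mult' mult_ac)
qed

lemma change_of_measure:
  assumes "G \<in> borel_measurable history_space"
  shows "(\<integral>\<^sup>+\<omega>. G (history \<pi> t \<omega>) \<partial>Q)
       = (\<integral>\<^sup>+\<omega>. G (history \<pi> t \<omega>) * ennreal (exp (history_llr t (history \<pi> t \<omega>))) \<partial>P)"
  using assms
proof (induction t arbitrary: G)
  case 0
  note [measurable] = "0.prems"
  have [measurable]: "(\<lambda>u. (u, (\<lambda>_. 0 :: nat), (\<lambda>_. 0 :: real))) \<in> borel \<rightarrow>\<^sub>M history_space"
    unfolding history_space_def
    by (intro measurable_Pair measurable_ident_sets measurable_const)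
      (auto simp: space_pair_measure space_PiM)
  have G0: "(\<lambda>u. G (u, (\<lambda>_. 0), (\<lambda>_. 0))) \<in> borel_measurable borel" by measurable
  show ?case
    using nn_integral_bandit_space_fst[OF admissible_\<mu> G0]
      nn_integral_bandit_space_fst[OF admissible_\<nu> G0]
    by (simp add: history_0 history_llr_def)
next
  case (Suc t)
  note [measurable] = Suc.prems measurable_policy[OF measurable_pi]
  have ext[measurable]:
    "(\<lambda>z. extend_history \<pi> t (fst z) (snd z)) \<in> history_space \<Otimes>\<^sub>M borel \<rightarrow>\<^sub>M history_space"
    by (rule measurable_extend_history[OF measurable_pi])
  define G' where "G' h = (\<integral>\<^sup>+y. G (extend_history \<pi> t h y) \<partial>D (\<nu> (\<pi> t h)))" for h
  have [measurable]: "G' \<in> borel_measurable history_space"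
    unfolding G'_def
    using measurable_nn_integral_arm[OF admissible_\<nu>,
        of "\<lambda>z. G (extend_history \<pi> t (fst z) (snd z))"]
    by simp
  have weight: "G' h * ennreal (exp (history_llr t h))
      = (\<integral>\<^sup>+y. G (extend_history \<pi> t h y)
          * ennreal (exp (history_llr (Suc t) (extend_history \<pi> t h y))) \<partial>D (\<mu> (\<pi> t h)))" for h
    unfolding G'_def by (rule nn_integral_density_step[OF Suc.prems])
  have "(\<integral>\<^sup>+\<omega>. G (history \<pi> (Suc t) \<omega>) \<partial>Q) = (\<integral>\<^sup>+\<omega>. G' (history \<pi> t \<omega>) \<partial>Q)"
    unfolding history_Suc G'_def
    using nn_integral_reward[OF admissible_\<nu>, of "\<lambda>z. G (extend_history \<pi> t (fst z) (snd z))"]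
    by (simp add: arm_def)
  also have "\<dots> = (\<integral>\<^sup>+\<omega>. G' (history \<pi> t \<omega>) * ennreal (exp (history_llr t (history \<pi> t \<omega>))) \<partial>P)"
    by (rule Suc.IH) measurable
  also have "\<dots> = (\<integral>\<^sup>+\<omega>. G (history \<pi> (Suc t) \<omega>)
      * ennreal (exp (history_llr (Suc t) (history \<pi> (Suc t) \<omega>))) \<partial>P)"
    unfolding weight history_Suc
    using nn_integral_reward[OF admissible_\<mu>, of "\<lambda>z. G (extend_history \<pi> t (fst z) (snd z))
        * ennreal (exp (history_llr (Suc t) (extend_history \<pi> t (fst z) (snd z))))"]
    by (simp add: arm_def)
  finally show ?case .
qed

lemma space_Q: "space Q = space P"
  using sets_bandit_space[OF admissible_\<mu>] sets_bandit_space[OF admissible_\<nu>]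
  by (metis sets_eq_imp_space_eq)

lemma prob_space_P: "prob_space P" and prob_space_Q: "prob_space Q"
  by (simp_all add: prob_space_bandit_space admissible_\<mu> admissible_\<nu>)

lemma measure_Q_history_event:
  assumes [measurable]: "Measurable.pred history_space \<Psi>"
  shows "measure Q {\<omega> \<in> space Q. \<Psi> (history \<pi> t \<omega>)}
       = (\<integral>\<omega>. indicator {\<omega> \<in> space P. \<Psi> (history \<pi> t \<omega>)} \<omega>
            * exp (history_llr t (history \<pi> t \<omega>)) \<partial>P)"
proof -
  interpret P: prob_space P by (rule prob_space_P)
  interpret Q: prob_space Q by (rule prob_space_Q)
  define E where "E = {\<omega> \<in> space P. \<Psi> (history \<pi> t \<omega>)}"
  have E_Q: "{\<omega> \<in> space Q. \<Psi> (history \<pi> t \<omega>)} = E" by (simp add: E_def space_Q)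
  have [measurable]: "E \<in> sets P" unfolding E_def by measurable
  have [measurable]: "E \<in> sets Q" unfolding E_Q[symmetric] by measurable
  have "integrable P (\<lambda>\<omega>. indicator E \<omega> * exp (history_llr t (history \<pi> t \<omega>)))"
    using abs_history_llr_le
    by (intro P.integrable_const_bound[where B="exp (real t * llr_bound)"])
       (auto simp: indicator_def abs_le_iff)
  then have "ennreal (\<integral>\<omega>. indicator E \<omega> * exp (history_llr t (history \<pi> t \<omega>)) \<partial>P)
      = (\<integral>\<^sup>+\<omega>. indicator {h. \<Psi> h} (history \<pi> t \<omega>)
          * ennreal (exp (history_llr t (history \<pi> t \<omega>))) \<partial>P)"
    by (subst nn_integral_eq_integral[symmetric])
       (auto intro!: nn_integral_cong simp: E_def indicator_def)
  also have "\<dots> = (\<integral>\<^sup>+\<omega>. indicator {h. \<Psi> h} (history \<pi> t \<omega>) \<partial>Q)"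
    by (rule change_of_measure[symmetric]) measurable
  also have "\<dots> = ennreal (measure Q E)"
    by (simp add: Q.emeasure_eq_measure[symmetric] nn_integral_indicator[symmetric] E_Q[symmetric]
        indicator_def cong: nn_integral_cong)
  finally show ?thesis
    by (subst (asm) ennreal_inj) (auto intro!: integral_nonneg_AE simp: E_Q E_def)
qed

lemma integrable_llr_round: "integrable P (\<lambda>\<omega>. llr (arm \<pi> s \<omega>) (reward \<pi> s \<omega>))"
proof -
  interpret P: prob_space P by (rule prob_space_P)
  have arm: "arm \<pi> s \<in> P \<rightarrow>\<^sub>M count_space UNIV"
    by (rule measurable_bandit_space[OF admissible_\<mu> measurable_arm])
  have [measurable]: "reward \<pi> s \<in> borel_measurable P"
    by (rule measurable_bandit_space[OF admissible_\<mu> measurable_reward])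
  have "(\<lambda>\<omega>. llr (arm \<pi> s \<omega>) (reward \<pi> s \<omega>)) \<in> borel_measurable P"
    by (rule measurable_compose_countable[where f="\<lambda>i \<omega>. llr i (reward \<pi> s \<omega>)", OF _ arm])
      measurable
  then show ?thesis
    using abs_llr_le[OF arm_in_arms] by (intro P.integrable_const_bound[where B=llr_bound]) auto
qed

lemma expectation_llr_round_ge:
  assumes M: "\<And>i. i \<in> {1..L} \<Longrightarrow> Dkl (D (\<mu> i)) (D (\<nu> i)) \<le> M"
  shows "- M \<le> (\<integral>\<omega>. llr (arm \<pi> s \<omega>) (reward \<pi> s \<omega>) \<partial>P)"
proof -
  interpret P: prob_space P by (rule prob_space_P)
  define g where "g i = - Dkl (D (\<mu> i)) (D (\<nu> i))" for i
  have g: "(\<integral>y. llr i y \<partial>D (\<mu> i)) = g i" if "i \<in> {1..L}" for i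
  proof -
    have "\<mu> i \<in> I" "\<nu> i \<in> I" using admissible_\<mu> admissible_\<nu> that by (auto simp: admissible_def)
    then show ?thesis by (simp add: g_def llr_def Dkl_eq_integral_log_density_ratio)
  qed
  have "\<bar>g (arm \<pi> s \<omega>)\<bar> \<le> (\<Sum>i\<in>{1..L}. \<bar>g i\<bar>)" for \<omega>
    by (rule member_le_sum[OF arm_in_arms]) auto
  then have "integrable P (\<lambda>\<omega>. g (arm \<pi> s \<omega>))"
    by (intro P.integrable_const_bound[where B="\<Sum>i\<in>{1..L}. \<bar>g i\<bar>"]
        measurable_compose[OF measurable_bandit_space[OF admissible_\<mu> measurable_arm]]) auto
  then have "- M \<le> (\<integral>\<omega>. g (arm \<pi> s \<omega>) \<partial>P)"
    using M[OF arm_in_arms] by (intro P.integral_ge_const) (auto simp: g_def)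
  also have "\<dots> = (\<integral>\<omega>. (\<integral>y. llr (arm \<pi> s \<omega>) y \<partial>D (\<mu> (arm \<pi> s \<omega>))) \<partial>P)"
    using g[OF arm_in_arms] by simp
  also have "\<dots> = (\<integral>\<omega>. llr (arm \<pi> s \<omega>) (reward \<pi> s \<omega>) \<partial>P)"
    by (rule integral_arm_reward[OF admissible_\<mu>, where C=llr_bound, symmetric])
      (simp_all add: abs_llr_le)
  finally show ?thesis .
qed

lemma expectation_history_llr_ge:
  assumes "\<And>i. i \<in> {1..L} \<Longrightarrow> Dkl (D (\<mu> i)) (D (\<nu> i)) \<le> M"
  shows "- (real t * M) \<le> (\<integral>\<omega>. history_llr t (history \<pi> t \<omega>) \<partial>P)"
proof -
  have "(\<Sum>s<t. - M) \<le> (\<Sum>s<t. \<integral>\<omega>. llr (arm \<pi> s \<omega>) (reward \<pi> s \<omega>) \<partial>P)"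
    using expectation_llr_round_ge[OF assms] by (rule sum_mono)
  also have "\<dots> = (\<integral>\<omega>. history_llr t (history \<pi> t \<omega>) \<partial>P)"
    unfolding history_llr_history using integrable_llr_round
    by (rule Bochner_Integration.integral_sum[symmetric])
  finally show ?thesis by simp
qed

lemma binary_kl_history_event_le:
  assumes [measurable]: "Measurable.pred history_space \<Psi>"
    and M: "\<And>i. i \<in> {1..L} \<Longrightarrow> Dkl (D (\<mu> i)) (D (\<nu> i)) \<le> M"
  shows "binary_kl (measure P {\<omega> \<in> space P. \<Psi> (history \<pi> t \<omega>)})
      (measure Q {\<omega> \<in> space Q. \<Psi> (history \<pi> t \<omega>)}) \<le> real t * M"
proof -
  interpret P: prob_space P by (rule prob_space_P)
  interpret Q: prob_space Q by (rule prob_space_Q)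
  define E where "E = {\<omega> \<in> space P. \<Psi> (history \<pi> t \<omega>)}"
  define q where "q = measure Q {\<omega> \<in> space Q. \<Psi> (history \<pi> t \<omega>)}"
  have E[measurable]: "E \<in> sets P" unfolding E_def by measurable
  have "space P - E = {\<omega> \<in> space P. \<not> \<Psi> (history \<pi> t \<omega>)}" by (auto simp: E_def)
  moreover have "1 - q = measure Q {\<omega> \<in> space Q. \<not> \<Psi> (history \<pi> t \<omega>)}"
  proof -
    have "{\<omega> \<in> space Q. \<not> \<Psi> (history \<pi> t \<omega>)} = space Q - {\<omega> \<in> space Q. \<Psi> (history \<pi> t \<omega>)}" by auto
    then show ?thesis by (simp add: q_def Q.prob_compl)
  qed
  ultimately have q_compl:
    "1 - q = (\<integral>\<omega>. indicator (space P - E) \<omega> * exp (history_llr t (history \<pi> t \<omega>)) \<partial>P)"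
    using measure_Q_history_event[of "\<lambda>h. \<not> \<Psi> h" t] by simp
  have q: "q = (\<integral>\<omega>. indicator E \<omega> * exp (history_llr t (history \<pi> t \<omega>)) \<partial>P)"
    unfolding q_def E_def by (rule measure_Q_history_event) simp
  have "binary_kl (P.prob E) q \<le> - (\<integral>\<omega>. history_llr t (history \<pi> t \<omega>) \<partial>P)"
    by (rule P.binary_kl_le_neg_expectation[OF E _ abs_history_llr_le q q_compl]) measurable
  also have "\<dots> \<le> real t * M"
    using expectation_history_llr_ge[OF M, of t] by linarith
  finally show ?thesis by (simp add: E_def q_def)
qed

lemma measure_Q_history_event_pos:
  assumes [measurable]: "Measurable.pred history_space \<Psi>"
    and pos: "0 < measure P {\<omega> \<in> space P. \<Psi> (history \<pi> t \<omega>)}"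
  shows "0 < measure Q {\<omega> \<in> space Q. \<Psi> (history \<pi> t \<omega>)}"
proof -
  interpret P: prob_space P by (rule prob_space_P)
  have "{\<omega> \<in> space P. \<Psi> (history \<pi> t \<omega>)} \<in> sets P" by measurable
  from P.integral_indicator_exp_pos[OF this pos _ abs_history_llr_le]
  show ?thesis unfolding measure_Q_history_event[OF assms(1)] by measurable
qed

lemma disjoint_events_lower_bound:
  assumes [measurable]: "Measurable.pred history_space \<Psi>" "Measurable.pred history_space \<Psi>'"
    and disjoint: "\<And>\<omega>. \<not> (\<Psi> (history \<pi> t \<omega>) \<and> \<Psi>' (history \<pi> t \<omega>))"
    and P_event: "1 - \<delta> \<le> measure P {\<omega> \<in> space P. \<Psi> (history \<pi> t \<omega>)}"
    and Q_event: "1 - \<delta> \<le> measure Q {\<omega> \<in> space Q. \<Psi>' (history \<pi> t \<omega>)}"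
    and \<delta>: "0 < \<delta>" "\<delta> < 5 / 12"
    and M: "\<And>i. i \<in> {1..L} \<Longrightarrow> Dkl (D (\<mu> i)) (D (\<nu> i)) \<le> M"
  shows "- ln (12 / 5 * \<delta>) \<le> real t * M"
proof -
  interpret Q: prob_space Q by (rule prob_space_Q)
  let ?E = "{\<omega> \<in> space Q. \<Psi> (history \<pi> t \<omega>)}" and ?E' = "{\<omega> \<in> space Q. \<Psi>' (history \<pi> t \<omega>)}"
  have "?E' \<in> Q.events" by measurable
  then have "measure Q ?E \<le> measure Q (space Q - ?E')"
    using disjoint by (intro Q.finite_measure_mono) auto
  also have "\<dots> \<le> \<delta>" using Q_event by (simp add: Q.prob_compl \<open>?E' \<in> Q.events\<close>)
  finally have "measure Q ?E \<le> \<delta>" .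
  moreover have "0 < measure Q ?E"
    using P_event \<delta> by (intro measure_Q_history_event_pos) simp_all
  ultimately have
    "- ln (12 / 5 * \<delta>) \<le> binary_kl (measure P {\<omega> \<in> space P. \<Psi> (history \<pi> t \<omega>)}) (measure Q ?E)"
    using P_event \<delta> prob_space.prob_le_1[OF prob_space_P] by (intro binary_kl_ge) simp_all
  also have "\<dots> \<le> real t * M" by (rule binary_kl_history_event_le[OF _ M]) simp
  finally show ?thesis .
qed

end

lemma bandit_pair_of_sp_exp_family:
  assumes "sp_exp_family D I" "\<forall>t h. \<pi> t h \<in> {1..L}" "policy_measurable \<pi>"
    and "\<forall>i\<in>{1..L}. \<mu> i \<in> I" "\<forall>i\<in>{1..L}. \<nu> i \<in> I"
  shows "\<exists>\<rho> \<theta> A. bandit_pair D I L \<pi> \<rho> \<theta> A \<mu> \<nu>"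
proof -
  obtain \<rho> \<theta> A where base: "sets \<rho> = sets borel" "emeasure \<rho> (- {0..1}) = 0"
    and D_eq: "\<And>m. m \<in> I \<Longrightarrow> D m = density \<rho> (\<lambda>x. ennreal (exp (\<theta> m * x - A m)))"
    and D_prob: "\<And>m. m \<in> I \<Longrightarrow> prob_space (D m)"
    using assms(1) unfolding sp_exp_family_def by metis
  have "bandit_model D I L \<pi>"
    using assms(2,3) by (intro bandit_model.intro D_prob) (auto simp: D_eq base(1))
  then have "bandit_pair D I L \<pi> \<rho> \<theta> A \<mu> \<nu>"
    using base D_eq assms(4,5)
    by (intro bandit_pair.intro exp_family_bandit.intro exp_family_bandit_axioms.intro
        bandit_pair_axioms.intro) (simp_all add: bandit_model.admissible_def)
  then show ?thesis by blast
qed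

lemma Dkl_self: "prob_space P \<Longrightarrow> Dkl P P = 0"
  by (simp add: Dkl_def prob_space_imp_sigma_finite sigma_finite_measure.KL_same_eq_0)

section \<open>Optimal savings of two-valued instances\<close>

lemma best_mean_eqI:
  assumes "i0 \<in> {1..L}" "\<And>i. i \<in> {1..L} \<Longrightarrow> \<mu> i \<le> \<mu> i0"
  shows "best_mean L \<mu> = \<mu> i0"
  unfolding best_mean_def using assms by (intro Max_eqI) auto

lemma best_mean_comp_permutes: "\<sigma> permutes {1..L} \<Longrightarrow> best_mean L (\<mu> \<circ> \<sigma>) = best_mean L \<mu>"
  by (metis best_mean_def image_comp permutes_image)

lemma save_hat_le:
  "save_hat D L \<mu> T n \<le> (\<Sum>i\<in>{1..L}. (best_mean L \<mu> - \<mu> i) * real (n i))"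
proof -
  have "real_of_ereal (min (ereal (real (n i))) (cfac D L \<mu> T i)) \<le> real (n i)" for i
    by (cases "cfac D L \<mu> T i") (auto simp: min_def)
  then have "save_hat D L \<mu> T n
      \<le> (\<Sum>i\<in>{i\<in>{1..L}. 0 < best_mean L \<mu> - \<mu> i}. (best_mean L \<mu> - \<mu> i) * real (n i))"
    unfolding save_hat_def by (intro sum_mono mult_left_mono) auto
  also have "\<dots> \<le> (\<Sum>i\<in>{1..L}. (best_mean L \<mu> - \<mu> i) * real (n i))"
    unfolding best_mean_def by (intro sum_mono2) (auto intro!: mult_nonneg_nonneg)
  finally show ?thesis .
qed

lemma sorting_perm_exists: "\<exists>\<sigma>. sorting_perm L \<mu> \<sigma>"
proof -
  define xs where "xs = sort_key (\<lambda>i. - \<mu> i) [1..<Suc L]"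
  have len: "length xs = L" and set_xs: "set xs = {1..L}" and "distinct xs"
    by (auto simp: xs_def)
  have sorted: "sorted (map (\<lambda>i. - \<mu> i) xs)" by (simp add: xs_def)
  define \<sigma> where "\<sigma> k = (if k \<in> {1..L} then xs ! (k - 1) else k)" for k
  have "bij_betw (\<lambda>k. k - 1) {1..L} {..<L}"
    by (rule bij_betwI[where g=Suc]) auto
  moreover have "bij_betw ((!) xs) {..<L} {1..L}"
    using \<open>distinct xs\<close> len set_xs by (intro bij_betw_nth) auto
  ultimately have "bij_betw \<sigma> {1..L} {1..L}"
    by (rule bij_betw_cong[THEN iffD1, rotated, OF bij_betw_trans]) (auto simp: \<sigma>_def)
  then have "\<sigma> permutes {1..L}"
    by (rule bij_imp_permutes) (auto simp: \<sigma>_def)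
  moreover have "\<mu> (\<sigma> j) \<le> \<mu> (\<sigma> i)" if "1 \<le> i" "i \<le> j" "j \<le> L" for i j
    using sorted_nth_mono[OF sorted, of "i - 1" "j - 1"] that len by (simp add: \<sigma>_def)
  ultimately show ?thesis unfolding sorting_perm_def by blast
qed

lemma card_permutes_filter: "\<sigma> permutes A \<Longrightarrow> card {j \<in> A. P (\<sigma> j)} = card {i \<in> A. P i}"
proof -
  assume \<sigma>: "\<sigma> permutes A"
  have "\<sigma> ` {j \<in> A. P (\<sigma> j)} = {i \<in> A. P i}"
    using permutes_image[OF \<sigma>] by (auto simp: image_iff)
  moreover have "inj_on \<sigma> {j \<in> A. P (\<sigma> j)}"
    using permutes_inj_on[OF \<sigma>] by (rule inj_on_subset) auto
  ultimately show ?thesis by (metis card_image)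
qed

lemma sorted_lower_level_set_eq:
  fixes \<nu> :: "nat \<Rightarrow> real"
  assumes sorted: "\<And>i j. 1 \<le> i \<Longrightarrow> i \<le> j \<Longrightarrow> j \<le> L \<Longrightarrow> \<nu> j \<le> \<nu> i"
    and two_valued: "\<And>j. j \<in> {1..L} \<Longrightarrow> \<nu> j = lo \<or> \<nu> j = hi" and "lo < hi"
    and "{j\<in>{1..L}. \<nu> j = lo} \<noteq> {}"
  shows "{j\<in>{1..L}. \<nu> j = lo} = {Min {j\<in>{1..L}. \<nu> j = lo}..L}"
proof
  define j0 where "j0 = Min {j\<in>{1..L}. \<nu> j = lo}"
  have "j0 \<in> {j\<in>{1..L}. \<nu> j = lo}" using assms(4) unfolding j0_def by (intro Min_in) auto
  show "{j\<in>{1..L}. \<nu> j = lo} \<subseteq> {j0..L}" by (auto simp: j0_def)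
  show "{j0..L} \<subseteq> {j\<in>{1..L}. \<nu> j = lo}"
  proof
    fix j assume "j \<in> {j0..L}"
    with \<open>j0 \<in> _\<close> have "\<nu> j \<le> lo" "j \<in> {1..L}" using sorted[of j0 j] by auto
    with two_valued[of j] \<open>lo < hi\<close> show "j \<in> {j\<in>{1..L}. \<nu> j = lo}" by auto
  qed
qed

lemma save_star_sorted_two_valued:
  fixes D :: "real \<Rightarrow> real measure" and T :: nat and \<nu> :: "nat \<Rightarrow> real" and lo hi :: real
  defines "c \<equiv> ln (real T) / Dkl (D lo) (D hi)"
  assumes sorted: "\<And>i j. 1 \<le> i \<Longrightarrow> i \<le> j \<Longrightarrow> j \<le> L \<Longrightarrow> \<nu> j \<le> \<nu> i"
    and two_valued: "\<And>j. j \<in> {1..L} \<Longrightarrow> \<nu> j = lo \<or> \<nu> j = hi" and "lo < hi"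
    and best: "best_mean L \<nu> = hi"
    and Dkl_lo: "Dkl (D lo) (D hi) \<noteq> 0" and Dkl_hi: "Dkl (D hi) (D hi) = 0"
    and lo_arm: "{j\<in>{1..L}. \<nu> j = lo} \<noteq> {}"
    and budget: "real TFE \<le> real (card {j\<in>{1..L}. \<nu> j = lo}) * c"
  shows "save_star_sorted D L \<nu> T TFE = (hi - lo) * real TFE"
proof -
  define Lo where "Lo = {j\<in>{1..L}. \<nu> j = lo}"
  define j0 where "j0 = Min Lo"
  have "j0 \<in> Lo" using lo_arm unfolding j0_def Lo_def by (intro Min_in) auto
  have Lo_eq: "Lo = {j0..L}"
    unfolding Lo_def j0_def
    by (rule sorted_lower_level_set_eq[OF sorted two_valued \<open>lo < hi\<close> lo_arm])
  have cfac: "cfac D L \<nu> T j = (if j \<in> Lo then ereal c else \<infinity>)" if "j \<in> {1..L}" for j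
    using two_valued[OF that] \<open>lo < hi\<close> Dkl_lo Dkl_hi that
    by (auto simp: cfac_def best c_def Lo_def)
  define S where "S = {j\<in>{1..L}. ereal (real TFE) \<le> (\<Sum>i\<in>{j..L}. cfac D L \<nu> T i)}"
  define iFE where "iFE = Max S"
  have "(\<Sum>i\<in>{j0..L}. cfac D L \<nu> T i) = (\<Sum>i\<in>Lo. ereal c)"
    unfolding Lo_eq[symmetric] by (rule sum.cong) (auto simp: cfac Lo_def)
  then have "(\<Sum>i\<in>{j0..L}. cfac D L \<nu> T i) = ereal (real (card Lo) * c)" by simp
  then have "j0 \<in> S" using \<open>j0 \<in> Lo\<close> budget by (simp add: S_def Lo_def)
  moreover have "finite S" by (simp add: S_def)
  ultimately have "j0 \<le> iFE" "iFE \<in> S" unfolding iFE_def by (auto intro: Max_ge Max_in)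
  then have iFE: "iFE \<in> Lo" "{iFE<..L} \<subseteq> Lo" using Lo_eq by (auto simp: S_def)
  have "(\<Sum>i\<in>{iFE<..L}. cfac D L \<nu> T i) = ereal (real (L - iFE) * c)"
    using iFE cfac by (simp add: subset_eq)
  moreover have "(\<Sum>i\<in>{iFE<..L}. ereal (hi - \<nu> i) * cfac D L \<nu> T i)
      = ereal (real (L - iFE) * ((hi - lo) * c))"
    using iFE cfac by (simp add: subset_eq Lo_def)
  moreover have "hi - \<nu> iFE = hi - lo" using iFE by (simp add: Lo_def)
  ultimately have "save_star_sorted D L \<nu> T TFE
      = real_of_ereal (ereal (hi - lo) * (ereal (real TFE) - ereal (real (L - iFE) * c))
          + ereal (real (L - iFE) * ((hi - lo) * c)))"
    unfolding save_star_sorted_def Let_def best S_def[symmetric] iFE_def[symmetric] by simp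
  then show ?thesis by (simp add: algebra_simps)
qed

lemma save_star_two_valued:
  fixes \<mu> :: "nat \<Rightarrow> real" and lo hi :: real
  assumes two_valued: "\<And>j. j \<in> {1..L} \<Longrightarrow> \<mu> j = lo \<or> \<mu> j = hi" and "lo < hi"
    and hi_arm: "\<exists>j\<in>{1..L}. \<mu> j = hi" and lo_arm: "{j\<in>{1..L}. \<mu> j = lo} \<noteq> {}"
    and Dkl_lo: "Dkl (D lo) (D hi) \<noteq> 0" and Dkl_hi: "Dkl (D hi) (D hi) = 0"
    and budget: "real TFE \<le> real (card {j\<in>{1..L}. \<mu> j = lo}) * (ln (real T) / Dkl (D lo) (D hi))"
  shows "save_star D L \<mu> T TFE = (hi - lo) * real TFE"
proof -
  obtain \<sigma> where \<sigma>: "sorting_perm L \<mu> \<sigma>" "(SOME \<sigma>. sorting_perm L \<mu> \<sigma>) = \<sigma>"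
    using someI_ex[OF sorting_perm_exists] by blast
  then have perm: "\<sigma> permutes {1..L}" by (simp add: sorting_perm_def)
  have best: "best_mean L \<mu> = hi"
    using hi_arm two_valued \<open>lo < hi\<close> by (metis best_mean_eqI order.refl order_less_imp_le)
  show ?thesis
    unfolding save_star_def \<sigma>(2)
  proof (rule save_star_sorted_two_valued)
    show "best_mean L (\<mu> \<circ> \<sigma>) = hi" by (simp add: best_mean_comp_permutes[OF perm] best)
    show "(\<mu> \<circ> \<sigma>) j = lo \<or> (\<mu> \<circ> \<sigma>) j = hi" if "j \<in> {1..L}" for j
      using two_valued permutes_in_image[OF perm] that by simp
    have card_eq: "card {j\<in>{1..L}. (\<mu> \<circ> \<sigma>) j = lo} = card {j\<in>{1..L}. \<mu> j = lo}"
      using card_permutes_filter[OF perm, of "\<lambda>i. \<mu> i = lo"] by simp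
    then show
      "real TFE \<le> real (card {j\<in>{1..L}. (\<mu> \<circ> \<sigma>) j = lo}) * (ln (real T) / Dkl (D lo) (D hi))"
      using budget by simp
    have "card {j\<in>{1..L}. \<mu> j = lo} \<noteq> 0" using lo_arm by simp
    with card_eq show "{j\<in>{1..L}. (\<mu> \<circ> \<sigma>) j = lo} \<noteq> {}" by (metis card.empty)
  qed (use \<sigma>(1) \<open>lo < hi\<close> Dkl_lo Dkl_hi in \<open>auto simp: sorting_perm_def\<close>)
qed

lemma saving_threshold_le:
  fixes \<alpha> F S \<Delta> :: real
  assumes "0 < \<alpha>" "0 < F" "\<alpha> * S \<le> \<Delta> * F"
  shows "S / F - (1 - \<alpha>) / \<alpha> * \<Delta> \<le> \<Delta>"
proof -
  have "S / F \<le> \<Delta> / \<alpha>" using assms by (simp add: field_simps)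
  then show ?thesis using assms by (simp add: field_simps)
qed

lemma saving_counts_contradiction:
  fixes A G :: "nat set" and \<Delta> n :: "nat \<Rightarrow> real" and \<alpha> S \<Delta>max :: real
  defines "F \<equiv> (\<Sum>i\<in>A. n i)"
  assumes A: "finite A" and G: "G \<subseteq> A" and "0 < \<alpha>" "\<alpha> < 1"
    and n: "\<And>i. i \<in> A \<Longrightarrow> 0 \<le> n i" and "0 < F"
    and gaps: "\<And>i. i \<in> A \<Longrightarrow> \<Delta> i \<le> \<Delta>max"
    and below: "\<And>i. i \<in> G \<Longrightarrow> \<Delta> i < S / F - (1 - \<alpha>) / \<alpha> * \<Delta>max"
    and save: "\<alpha> * S \<le> (\<Sum>i\<in>A. \<Delta> i * n i)"
    and save_G: "\<alpha> * F \<le> (\<Sum>i\<in>G. n i)"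
  shows False
proof -
  define g where "g = (\<Sum>i\<in>G. n i)"
  have "finite G" using G A by (rule finite_subset)
  have "G \<noteq> {}" using save_G mult_pos_pos[OF \<open>0 < \<alpha>\<close> \<open>0 < F\<close>] by auto
  define th where "th = Max (\<Delta> ` G)"
  have th: "th < S / F - (1 - \<alpha>) / \<alpha> * \<Delta>max" "th \<le> \<Delta>max"
    using Max_in[of "\<Delta> ` G"] \<open>finite G\<close> \<open>G \<noteq> {}\<close> below gaps G by (auto simp: th_def)
  have "(\<Sum>i\<in>A. \<Delta> i * n i) = (\<Sum>i\<in>G. \<Delta> i * n i) + (\<Sum>i\<in>A - G. \<Delta> i * n i)"
    using A G by (simp add: sum.subset_diff)
  also have "\<dots> \<le> (\<Sum>i\<in>G. th * n i) + (\<Sum>i\<in>A - G. \<Delta>max * n i)"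
    using \<open>finite G\<close> \<open>G \<subseteq> A\<close> n gaps
    by (intro add_mono sum_mono mult_right_mono) (auto simp: th_def)
  also have "\<dots> = th * g + \<Delta>max * (F - g)"
    using A G by (simp add: g_def F_def sum_distrib_left sum.subset_diff[of G A n])
  also have "\<dots> \<le> \<alpha> * F * th + (1 - \<alpha>) * F * \<Delta>max"
    using save_G th(2) mult_left_mono[of "\<alpha> * F" g "\<Delta>max - th"] by (simp add: g_def algebra_simps)
  also have "\<dots> < \<alpha> * S"
    using th(1) \<open>0 < F\<close> \<open>0 < \<alpha>\<close> by (simp add: field_simps)
  finally show False using save by simp
qed

lemma save_star_threshold_instance:
  fixes D :: "real \<Rightarrow> real measure" and L T TFE :: nat and \<mu> :: "nat \<Rightarrow> real" and thr \<xi> :: real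
  defines "lo \<equiv> (\<mu> 1 + \<mu> L - \<xi>) / 2" and "hi \<equiv> (\<mu> 1 + \<mu> L + \<xi>) / 2"
  defines "G \<equiv> {i\<in>{1..L}. \<mu> 1 - \<mu> i < thr}"
  assumes "thr \<le> \<mu> 1 - \<mu> L" "1 \<le> L" "0 < \<xi>" "G \<noteq> {}"
    and "Dkl (D lo) (D hi) \<noteq> 0" "Dkl (D hi) (D hi) = 0"
    and budget: "real TFE \<le> real (card G) * (ln (real T) / Dkl (D lo) (D hi))"
  shows "save_star D L (\<lambda>i. if \<mu> 1 - \<mu> i < thr then lo else hi) T TFE = \<xi> * real TFE"
proof -
  have "lo < hi" "hi - lo = \<xi>" using \<open>0 < \<xi>\<close> by (simp_all add: lo_def hi_def field_simps)
  have "{j\<in>{1..L}. (if \<mu> 1 - \<mu> j < thr then lo else hi) = lo} = G"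
    using \<open>lo < hi\<close> by (auto simp: G_def)
  then have "save_star D L (\<lambda>i. if \<mu> 1 - \<mu> i < thr then lo else hi) T TFE = (hi - lo) * real TFE"
    using assms \<open>lo < hi\<close> by (intro save_star_two_valued) (auto intro!: bexI[of _ L])
  then show ?thesis using \<open>hi - lo = \<xi>\<close> by simp
qed

lemma save_hat_threshold_instance_le:
  fixes D :: "real \<Rightarrow> real measure" and L T :: nat and \<mu> :: "nat \<Rightarrow> real" and thr \<xi> :: real
    and n :: "nat \<Rightarrow> nat"
  defines "lo \<equiv> (\<mu> 1 + \<mu> L - \<xi>) / 2" and "hi \<equiv> (\<mu> 1 + \<mu> L + \<xi>) / 2"
  assumes "thr \<le> \<mu> 1 - \<mu> L" "1 \<le> L" "0 < \<xi>"
  shows "save_hat D L (\<lambda>i. if \<mu> 1 - \<mu> i < thr then lo else hi) T n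
      \<le> \<xi> * (\<Sum>i\<in>{i\<in>{1..L}. \<mu> 1 - \<mu> i < thr}. real (n i))"
proof -
  let ?\<nu> = "\<lambda>i. if \<mu> 1 - \<mu> i < thr then lo else hi"
  have "lo < hi" using \<open>0 < \<xi>\<close> by (simp add: lo_def hi_def)
  then have "best_mean L ?\<nu> = hi"
    using assms(3,4) by (intro trans[OF best_mean_eqI[of L]]) auto
  then have "save_hat D L ?\<nu> T n \<le> (\<Sum>i\<in>{1..L}. (hi - ?\<nu> i) * real (n i))"
    using save_hat_le[of D L ?\<nu> T n] by simp
  also have "\<dots> = \<xi> * (\<Sum>i\<in>{i\<in>{1..L}. \<mu> 1 - \<mu> i < thr}. real (n i))"
    unfolding sum_distrib_left
    by (rule sum.mono_neutral_cong_right) (auto simp: lo_def hi_def field_simps)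
  finally show ?thesis .
qed

lemma alternative_instance_not_saving:
  fixes D :: "real \<Rightarrow> real measure" and L T TFE :: nat and \<mu> :: "nat \<Rightarrow> real"
    and \<alpha> \<xi> :: real and n :: "nat \<Rightarrow> nat"
  defines "thr \<equiv> save_star D L \<mu> T TFE / real TFE - (1 - \<alpha>) / \<alpha> * (\<mu> 1 - \<mu> L)"
    and "lo \<equiv> (\<mu> 1 + \<mu> L - \<xi>) / 2" and "hi \<equiv> (\<mu> 1 + \<mu> L + \<xi>) / 2"
  defines "G \<equiv> {i\<in>{1..L}. \<mu> 1 - \<mu> i < thr}"
  assumes sorted: "\<forall>i j. 1 \<le> i \<longrightarrow> i \<le> j \<longrightarrow> j \<le> L \<longrightarrow> \<mu> j \<le> \<mu> i"
    and "0 < \<alpha>" "\<alpha> < 1" "0 < \<xi>" "0 < TFE" "G \<noteq> {}"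
    and budget: "real TFE < real (card G) * ln (real T) / Dkl (D lo) (D hi)"
    and Dkl_lo: "Dkl (D lo) (D hi) \<noteq> 0" and Dkl_hi: "Dkl (D hi) (D hi) = 0"
    and counts: "(\<Sum>i\<in>{1..L}. n i) = TFE"
    and saving: "\<alpha> * save_star D L \<mu> T TFE \<le> save_hat D L \<mu> T n"
  shows "save_hat D L (\<lambda>i. if \<mu> 1 - \<mu> i < thr then lo else hi) T n
       < \<alpha> * save_star D L (\<lambda>i. if \<mu> 1 - \<mu> i < thr then lo else hi) T TFE"
proof (rule ccontr)
  assume not_less: "\<not> ?thesis"
  have "1 \<le> L" using \<open>G \<noteq> {}\<close> by (auto simp: G_def)
  have gaps: "\<mu> 1 - \<mu> i \<le> \<mu> 1 - \<mu> L" if "i \<in> {1..L}" for i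
    using sorted that by auto
  have counts': "(\<Sum>i\<in>{1..L}. real (n i)) = real TFE" using counts by (metis of_nat_sum)
  have save_\<mu>: "\<alpha> * save_star D L \<mu> T TFE \<le> (\<Sum>i\<in>{1..L}. (\<mu> 1 - \<mu> i) * real (n i))"
    using saving save_hat_le[of D L \<mu> T n] best_mean_eqI[of 1 L \<mu>] sorted \<open>1 \<le> L\<close> by auto
  also have "\<dots> \<le> (\<mu> 1 - \<mu> L) * real TFE"
    unfolding counts'[symmetric] sum_distrib_left using gaps
    by (intro sum_mono mult_right_mono) auto
  \<comment> \<open>hence the worst arm \<open>L\<close> is a good arm of the alternative instance\<close>
  finally have thr_le: "thr \<le> \<mu> 1 - \<mu> L"
    unfolding thr_def using \<open>0 < \<alpha>\<close> \<open>0 < TFE\<close> by (intro saving_threshold_le) simp_all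
  have "save_star D L (\<lambda>i. if \<mu> 1 - \<mu> i < thr then lo else hi) T TFE = \<xi> * real TFE"
    unfolding lo_def hi_def
    by (rule save_star_threshold_instance)
      (use thr_le \<open>1 \<le> L\<close> \<open>0 < \<xi>\<close> \<open>G \<noteq> {}\<close> Dkl_lo Dkl_hi budget in
        \<open>simp_all add: G_def lo_def hi_def\<close>)
  moreover have "save_hat D L (\<lambda>i. if \<mu> 1 - \<mu> i < thr then lo else hi) T n \<le> \<xi> * (\<Sum>i\<in>G. real (n i))"
    unfolding lo_def hi_def G_def
    by (rule save_hat_threshold_instance_le) (use thr_le \<open>1 \<le> L\<close> \<open>0 < \<xi>\<close> in simp_all)
  ultimately have "\<xi> * (\<alpha> * real TFE) \<le> \<xi> * (\<Sum>i\<in>G. real (n i))"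
    using not_less by (simp add: mult_ac)
  then have save_G: "\<alpha> * (\<Sum>i\<in>{1..L}. real (n i)) \<le> (\<Sum>i\<in>G. real (n i))"
    using \<open>0 < \<xi>\<close> counts' by simp
  have below: "\<mu> 1 - \<mu> i
      < save_star D L \<mu> T TFE / (\<Sum>i\<in>{1..L}. real (n i)) - (1 - \<alpha>) / \<alpha> * (\<mu> 1 - \<mu> L)"
    if "i \<in> G" for i
    using that unfolding counts' by (simp add: G_def thr_def)
  show False
    by (rule saving_counts_contradiction[where A="{1..L}" and G=G and n="\<lambda>i. real (n i)"
          and \<Delta>="\<lambda>i. \<mu> 1 - \<mu> i" and \<Delta>max="\<mu> 1 - \<mu> L", OF _ _ _ _ _ _ _ below save_\<mu> save_G])
       (use gaps counts' \<open>0 < \<alpha>\<close> \<open>\<alpha> < 1\<close> \<open>0 < TFE\<close> in \<open>auto simp: G_def\<close>)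
qed

lemma confidence_level:
  fixes T \<beta> :: real
  assumes "1 < T" "0 < \<beta>"
  shows "0 < T powr (- \<beta>) / 2.4" "T powr (- \<beta>) / 2.4 < 5 / 12"
    and "- ln (12 / 5 * (T powr (- \<beta>) / 2.4)) = \<beta> * ln T"
proof -
  have "T powr (- \<beta>) < 1" using assms by (intro powr_less_one) auto
  then show "0 < T powr (- \<beta>) / 2.4" "T powr (- \<beta>) / 2.4 < 5 / 12" using assms by simp_all
  show "- ln (12 / 5 * (T powr (- \<beta>) / 2.4)) = \<beta> * ln T" using assms by (simp add: ln_powr)
qed

context bandit_pair
begin

lemma probably_saving_lower_bound:
  assumes saving: "probably_saving D L \<pi> \<alpha> \<beta> T TFE {\<mu>, \<nu>}"
    and not_both: "\<And>n. (\<Sum>i\<in>{1..L}. n i) = TFE \<Longrightarrow> \<alpha> * save_star D L \<mu> T TFE \<le> save_hat D L \<mu> T n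
        \<Longrightarrow> save_hat D L \<nu> T n < \<alpha> * save_star D L \<nu> T TFE"
    and T: "1 < real T" and \<beta>: "0 < \<beta>"
    and M: "\<And>i. i \<in> {1..L} \<Longrightarrow> Dkl (D (\<mu> i)) (D (\<nu> i)) \<le> M"
  shows "\<beta> * ln (real T) / M \<le> real TFE"
proof -
  define \<delta> where "\<delta> = real T powr (- \<beta>) / 2.4"
  define saves where "saves \<mu>' h \<longleftrightarrow>
    \<alpha> * save_star D L \<mu>' T TFE \<le> save_hat D L \<mu>' T (count_list (arms_played TFE h))" for \<mu>' h
  have [measurable]: "Measurable.pred history_space (saves \<mu>')" for \<mu>'
    unfolding saves_def by (rule measurable_compose[OF measurable_arms_played]) simp
  have events: "1 - \<delta>
      \<le> measure (bandit_space D L \<mu>') {\<omega> \<in> space (bandit_space D L \<mu>'). saves \<mu>' (history \<pi> TFE \<omega>)}"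
    if "\<mu>' \<in> {\<mu>, \<nu>}" for \<mu>'
    using saving that by (auto simp: probably_saving_def saves_def pulls_eq_count_list \<delta>_def)
  have "\<not> (saves \<mu> (history \<pi> TFE \<omega>) \<and> saves \<nu> (history \<pi> TFE \<omega>))" for \<omega>
    using not_both[OF sum_count_arms_played[of TFE \<omega>]] unfolding saves_def by linarith
  from disjoint_events_lower_bound[OF _ _ this events[of \<mu>] events[of \<nu>]]
  have "- ln (12 / 5 * \<delta>) \<le> real TFE * M"
    using confidence_level[OF T \<beta>] M by (simp add: \<delta>_def)
  then have "\<beta> * ln (real T) \<le> real TFE * M" using confidence_level(3)[OF T \<beta>] by (simp add: \<delta>_def)
  moreover have "0 < \<beta> * ln (real T)" using T \<beta> by simp
  ultimately have "0 < real TFE * M" by linarith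
  then have "0 < M" by (simp add: zero_less_mult_iff)
  with \<open>\<beta> * ln (real T) \<le> real TFE * M\<close> show ?thesis by (simp add: pos_divide_le_eq)
qed

end

lemma budget_condition_pos:
  fixes k T :: nat and x d :: real
  assumes "0 < x" "x < real k * ln (real T) / d"
  shows "1 < real T" and "0 < d"
proof -
  have "0 \<le> ln (real T)" by (cases "T = 0") simp_all
  moreover have "0 < real k * ln (real T) / d" using assms by linarith
  ultimately have "0 < ln (real T)" "0 < d"
    by (auto simp: zero_less_divide_iff zero_less_mult_iff mult_less_0_iff)
  then show "0 < d" by simp
  from \<open>0 < ln (real T)\<close> show "1 < real T" by (cases "T = 0") (simp_all add: ln_gt_zero_iff)
qed

theorem mainTheorem7:
  fixes D :: "real \<Rightarrow> real measure" and I :: "real set"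
    and L T TFE :: nat and \<mu> :: "nat \<Rightarrow> real" and \<alpha> \<beta> \<xi>1 :: real and \<pi> :: policy
  assumes family: "sp_exp_family D I"
    and means_in: "\<forall>i\<in>{1..L}. \<mu> i \<in> I"
    and sorted: "\<forall>i j. 1 \<le> i \<longrightarrow> i \<le> j \<longrightarrow> j \<le> L \<longrightarrow> \<mu> j \<le> \<mu> i"
    and gap: "\<mu> 1 > \<mu> L"
    and TFE_pos: "TFE > 0"
    and alpha: "0 < \<alpha>" "\<alpha> < 1"
    and beta: "0 < \<beta>" "\<beta> < 1"
    and xi_pos: "\<xi>1 > 0"
    and low_in: "(\<mu> 1 + \<mu> L - \<xi>1) / 2 \<in> I"
    and high_in: "(\<mu> 1 + \<mu> L + \<xi>1) / 2 \<in> I"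
    and Lg_nonempty:
      "{i\<in>{1..L}. \<mu> 1 - \<mu> i < save_star D L \<mu> T TFE / real TFE - (1 - \<alpha>) / \<alpha> * (\<mu> 1 - \<mu> L)} \<noteq> {}"
    and Lg_large:
      "real (card {i\<in>{1..L}. \<mu> 1 - \<mu> i < save_star D L \<mu> T TFE / real TFE - (1 - \<alpha>) / \<alpha> * (\<mu> 1 - \<mu> L)})
         * ln (real T) / Dkl (D ((\<mu> 1 + \<mu> L - \<xi>1) / 2)) (D ((\<mu> 1 + \<mu> L + \<xi>1) / 2)) > real TFE"
    and policy_arms: "\<forall>t x. \<pi> t x \<in> {1..L}"
    and policy_meas: "policy_measurable \<pi>"
    and saving: "probably_saving D L \<pi> \<alpha> \<beta> T TFE
       {\<mu>, (\<lambda>i. if \<mu> 1 - \<mu> i < save_star D L \<mu> T TFE / real TFE - (1 - \<alpha>) / \<alpha> * (\<mu> 1 - \<mu> L)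
                then (\<mu> 1 + \<mu> L - \<xi>1) / 2 else (\<mu> 1 + \<mu> L + \<xi>1) / 2)}"
  shows "real TFE \<ge> \<beta> * ln (real T) /
     Max ((\<lambda>i. Dkl (D (\<mu> i))
        (D (if \<mu> 1 - \<mu> i < save_star D L \<mu> T TFE / real TFE - (1 - \<alpha>) / \<alpha> * (\<mu> 1 - \<mu> L)
            then (\<mu> 1 + \<mu> L - \<xi>1) / 2 else (\<mu> 1 + \<mu> L + \<xi>1) / 2))) ` {1..L})"
proof -
  define thr where "thr = save_star D L \<mu> T TFE / real TFE - (1 - \<alpha>) / \<alpha> * (\<mu> 1 - \<mu> L)"
  define lo where "lo = (\<mu> 1 + \<mu> L - \<xi>1) / 2"
  define hi where "hi = (\<mu> 1 + \<mu> L + \<xi>1) / 2"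
  define \<nu> where "\<nu> = (\<lambda>i. if \<mu> 1 - \<mu> i < thr then lo else hi)"
  have "\<forall>i\<in>{1..L}. \<nu> i \<in> I" using low_in high_in by (simp add: \<nu>_def lo_def hi_def)
  then obtain \<rho> \<theta> A where "bandit_pair D I L \<pi> \<rho> \<theta> A \<mu> \<nu>"
    using bandit_pair_of_sp_exp_family[OF family policy_arms policy_meas means_in] by blast
  then interpret bandit_pair D I L \<pi> \<rho> \<theta> A \<mu> \<nu> .
  have "1 < real T" and Dkl_lo: "0 < Dkl (D lo) (D hi)"
    using budget_condition_pos[OF _ Lg_large] TFE_pos by (simp_all add: lo_def hi_def)
  have Dkl_hi: "Dkl (D hi) (D hi) = 0" using high_in by (simp add: hi_def Dkl_self prob_space_D)
  have not_saving: "save_hat D L \<nu> T n < \<alpha> * save_star D L \<nu> T TFE"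
    if "(\<Sum>i\<in>{1..L}. n i) = TFE" "\<alpha> * save_star D L \<mu> T TFE \<le> save_hat D L \<mu> T n" for n
    unfolding \<nu>_def thr_def lo_def hi_def
    by (rule alternative_instance_not_saving)
      (use that sorted alpha xi_pos TFE_pos Lg_nonempty Lg_large Dkl_lo Dkl_hi in
        \<open>simp_all add: lo_def hi_def\<close>)
  have "\<beta> * ln (real T) / Max ((\<lambda>i. Dkl (D (\<mu> i)) (D (\<nu> i))) ` {1..L}) \<le> real TFE"
    using saving unfolding \<nu>_def[symmetric] thr_def[symmetric] lo_def[symmetric] hi_def[symmetric]
    by (rule probably_saving_lower_bound[OF _ not_saving \<open>1 < real T\<close> beta(1)]) (auto intro: Max_ge)
  then show ?thesis unfolding \<nu>_def thr_def lo_def hi_def .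
qed

end
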